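(* In the setting of the context, for every compact set $B\subset\mathrm{G}/\Gamma_i$ there exists $C<0$ such that whenever $k\in\mathrm{K}$, $a\in\mathrm{A}^+_{\mathrm{M}_{\mathscr{I}_0}}$, $b\in\mathrm{A}_{\mathscr{I}_0}$ and $\log a+\log b\notin\mathcal{C}_C$, the image of $kabG_{\mathrm{hor}}$ in $\mathrm{G}/\Gamma_i$ does not meet $B$.
   Context: $N\ge2$, $\mathrm{G}=\mathrm{SL}_N(\mathbb{R})$, $\mathrm{K}=\mathrm{SO}_N(\mathbb{R})$. $\mathscr{I}_0=\{I_1,\dots,I_{k_0}\}$: partition of $\{1,\dots,N\}$ into nonempty consecutive blocks; $i\sim j$ iff same block. $\mathrm{U}_{\mathscr{I}_0}:=\{g:(\mathrm{id}-g)\mathbb{R}^{I_k}\subset\mathbb{R}^{I_1\cup\dots\cup I_{k-1}}\forall k\}$, $G_{\mathrm{hor}}$ the stabilizer of $\mathrm{U}_{\mathscr{I}_0}\mathrm{K}/\mathrm{K}$ in $\mathrm{G}$. $\Gamma$: lattice commensurable with $\mathrm{SL}_N(\mathbb{Z})$, $\Gamma'\le\Gamma$ neat of finite index, $q_i\in\Gamma$, $\Gamma_i:=q_i^{-1}\Gamma'q_i$. $\mathrm{A}_{\mathscr{I}_0}$: positive diagonal determinant-1 matrices constant on blocks. $\mathrm{A}^+_{\mathrm{M}_{\mathscr{I}_0}}$: positive diagonal $a$ with $\prod_{i\in I_k}a_i=1$ for all $k$ and $a_i\ge a_j$ for $i<j$, $i\sim j$. For $C\in\mathbb{R}$, $\mathcal{C}_C$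 is the set of traceless real diagonal $\mathrm{diag}(x_1,\dots,x_N)$ with $x_i-x_j\ge\max\{0,C\}$ whenever $i<j$ lie in the same block, and $\sum_{i\in I_1\cup\dots\cup I_k}x_i\ge C$ for all $1\le k<k_0$. *)

theory Defs
  imports "HOL-Analysis.Analysis" "Jordan_Normal_Form.Determinant" "Jordan_Normal_Form.Char_Poly"
begin

definition SL :: "nat \<Rightarrow> real mat set" where
  "SL N = {g \<in> carrier_mat N N. det g = 1}"

definition SO :: "nat \<Rightarrow> real mat set" where
  "SO N = {g \<in> carrier_mat N N. g * transpose_mat g = 1\<^sub>m N \<and> det g = 1}"

definition SLZ :: "nat \<Rightarrow> real mat set" where
  "SLZ N = {g \<in> SL N. \<forall>i<N. \<forall>j<N. g $$ (i,j) \<in> \<int>}"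

definition mat_subgroup :: "nat \<Rightarrow> real mat set \<Rightarrow> bool" where
  "mat_subgroup N H \<longleftrightarrow> H \<subseteq> SL N \<and> 1\<^sub>m N \<in> H \<and>
     (\<forall>g\<in>H. \<forall>h\<in>H. g * h \<in> H) \<and> (\<forall>g\<in>H. \<exists>h\<in>H. g * h = 1\<^sub>m N \<and> h * g = 1\<^sub>m N)"

definition finite_index :: "real mat set \<Rightarrow> real mat set \<Rightarrow> bool" where
  "finite_index H L \<longleftrightarrow> H \<subseteq> L \<and> finite ((\<lambda>g. (\<lambda>h. g * h) ` H) ` L)"

definition commensurable :: "nat \<Rightarrow> real mat set \<Rightarrow> real mat set \<Rightarrow> bool" where
  "commensurable N H L \<longleftrightarrow> mat_subgroup N (H \<inter> L) \<and> finite_index (H \<inter> L) H \<and> finite_index (H \<inter> L) L"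

inductive_set gen_mult_group :: "complex set \<Rightarrow> complex set" for E where
  one: "1 \<in> gen_mult_group E"
| gen: "z \<in> E \<Longrightarrow> z \<in> gen_mult_group E"
| mult: "x \<in> gen_mult_group E \<Longrightarrow> y \<in> gen_mult_group E \<Longrightarrow> x * y \<in> gen_mult_group E"
| inv: "x \<in> gen_mult_group E \<Longrightarrow> inverse x \<in> gen_mult_group E"

definition complex_eigenvalues :: "real mat \<Rightarrow> complex set" where
  "complex_eigenvalues g = {z. eigenvalue (map_mat complex_of_real g) z}"

definition neat :: "real mat set \<Rightarrow> bool" where
  "neat H \<longleftrightarrow> (\<forall>g\<in>H. \<forall>z\<in>gen_mult_group (complex_eigenvalues g). \<forall>n::nat. n > 0 \<longrightarrow> z ^ n = 1 \<longrightarrow> z = 1)"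

definition blockstart :: "nat list \<Rightarrow> nat \<Rightarrow> nat" where
  "blockstart ns k = sum_list (take k ns)"

definition block :: "nat list \<Rightarrow> nat \<Rightarrow> nat set" where
  "block ns k = {blockstart ns k ..< blockstart ns (Suc k)}"

definition valid_blocks :: "nat \<Rightarrow> nat list \<Rightarrow> bool" where
  "valid_blocks N ns \<longleftrightarrow> ns \<noteq> [] \<and> (\<forall>n\<in>set ns. n > 0) \<and> sum_list ns = N"

definition same_block :: "nat list \<Rightarrow> nat \<Rightarrow> nat \<Rightarrow> bool" where
  "same_block ns i j \<longleftrightarrow> (\<exists>k<length ns. i \<in> block ns k \<and> j \<in> block ns k)"

text \<open>U: (id - g) maps R^{I_k} into R^{I_1 \<union> ... \<union> I_(k-1)} = vectors supported on {0..<blockstart k}.\<close>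
definition U_blk :: "nat \<Rightarrow> nat list \<Rightarrow> real mat set" where
  "U_blk N ns = {g \<in> SL N. \<forall>k<length ns. \<forall>v\<in>carrier_vec N.
      (\<forall>i<N. i \<notin> block ns k \<longrightarrow> v $ i = 0) \<longrightarrow>
      (\<forall>i<N. blockstart ns k \<le> i \<longrightarrow> (v - g *\<^sub>v v) $ i = 0)}"

text \<open>Stabilizer in G of U K / K \<subseteq> G/K (equivalently of the right-K-invariant set U K \<subseteq> G).\<close>
definition G_hor :: "nat \<Rightarrow> nat list \<Rightarrow> real mat set" where
  "G_hor N ns = (let UK = {u * k | u k. u \<in> U_blk N ns \<and> k \<in> SO N} in
     {g \<in> SL N. (\<lambda>x. g * x) ` UK = UK})"

definition pos_diag :: "nat \<Rightarrow> real mat \<Rightarrow> bool" where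
  "pos_diag N a \<longleftrightarrow> a \<in> carrier_mat N N \<and> diagonal_mat a \<and> (\<forall>i<N. a $$ (i,i) > 0)"

definition A_blk :: "nat \<Rightarrow> nat list \<Rightarrow> real mat set" where
  "A_blk N ns = {b. pos_diag N b \<and> det b = 1 \<and>
      (\<forall>i<N. \<forall>j<N. same_block ns i j \<longrightarrow> b $$ (i,i) = b $$ (j,j))}"

definition A_plus_M :: "nat \<Rightarrow> nat list \<Rightarrow> real mat set" where
  "A_plus_M N ns = {a. pos_diag N a \<and> (\<forall>k<length ns. (\<Prod>i\<in>block ns k. a $$ (i,i)) = 1) \<and>
      (\<forall>i<N. \<forall>j<N. i < j \<and> same_block ns i j \<longrightarrow> a $$ (i,i) \<ge> a $$ (j,j))}"

definition log_diag :: "nat \<Rightarrow> real mat \<Rightarrow> real mat" where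
  "log_diag N a = mat_diag N (\<lambda>i. ln (a $$ (i,i)))"

definition cone_C :: "nat \<Rightarrow> nat list \<Rightarrow> real \<Rightarrow> real mat set" where
  "cone_C N ns C = {x \<in> carrier_mat N N. diagonal_mat x \<and> (\<Sum>i<N. x $$ (i,i)) = 0 \<and>
      (\<forall>i<N. \<forall>j<N. i < j \<and> same_block ns i j \<longrightarrow> x $$ (i,i) - x $$ (j,j) \<ge> max 0 C) \<and>
      (\<forall>k. 1 \<le> k \<and> k < length ns \<longrightarrow> (\<Sum>i<blockstart ns k. x $$ (i,i)) \<ge> C)}"

definition entries :: "nat \<Rightarrow> real mat \<Rightarrow> nat \<times> nat \<Rightarrow> real" where
  "entries N g = (\<lambda>(i,j). if i < N \<and> j < N then g $$ (i,j) else 0)"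

definition G_top :: "nat \<Rightarrow> real mat topology" where
  "G_top N = pullback_topology (SL N) (entries N) (product_topology (\<lambda>_. euclideanreal) UNIV)"

definition lcoset :: "real mat set \<Rightarrow> real mat \<Rightarrow> real mat set" where
  "lcoset H g = (\<lambda>h. g * h) ` H"

definition quot_top :: "'a topology \<Rightarrow> ('a \<Rightarrow> 'b) \<Rightarrow> 'b topology" where
  "quot_top X f = topology (\<lambda>U. U \<subseteq> f ` topspace X \<and> openin X {x \<in> topspace X. f x \<in> U})"

lemma istopology_quot_top:
  "istopology (\<lambda>U. U \<subseteq> f ` topspace X \<and> openin X {x \<in> topspace X. f x \<in> U})"
  unfolding istopology_def
proof (rule conjI; intro allI impI)
  fix S T assume a: "S \<subseteq> f ` topspace X \<and> openin X {x \<in> topspace X. f x \<in> S}"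
     "T \<subseteq> f ` topspace X \<and> openin X {x \<in> topspace X. f x \<in> T}"
  have "{x \<in> topspace X. f x \<in> S \<inter> T} = {x \<in> topspace X. f x \<in> S} \<inter> {x \<in> topspace X. f x \<in> T}" by auto
  with a show "S \<inter> T \<subseteq> f ` topspace X \<and> openin X {x \<in> topspace X. f x \<in> S \<inter> T}" by (auto intro: openin_Int)
next
  fix K assume a: "\<forall>S\<in>K. S \<subseteq> f ` topspace X \<and> openin X {x \<in> topspace X. f x \<in> S}"
  have "{x \<in> topspace X. f x \<in> \<Union>K} = (\<Union>S\<in>K. {x \<in> topspace X. f x \<in> S})" by auto
  with a show "\<Union>K \<subseteq> f ` topspace X \<and> openin X {x \<in> topspace X. f x \<in> \<Union>K}" by (auto intro!: openin_Union)
qed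

definition quotient_space :: "nat \<Rightarrow> real mat set \<Rightarrow> real mat set topology" where
  "quotient_space N \<Gamma> = quot_top (G_top N) (lcoset \<Gamma>)"

end

theory Submission
  imports Defs
begin

text \<open>For m the start of a block, consider the squared volume col_gram N m g of the first m
  columns of g. It is invariant under left multiplication by K, and also under right
  multiplication by G_hor: an element u k of G_hor keeps U K invariant, which forces the
  orthogonal factor k to be block upper triangular, because the volume of the last N - m rows is
  1 on all of U K. On k a b it equals exp (2 (x_1 + ... + x_m)), where x = log a + log b.

  On the other hand, col_gram N m is bounded below by some c > 0 on all representatives of the
  compact set B: near every point the representatives expand vectors uniformly, \<Gamma>_i lies in
  finitely many cosets \<rho> (\<Gamma> \<inter> SL_N(Z)), and integer matrices have volume at least 1. For C < 0
  the only cone condition that can fail is a partial sum x_1 + ... + x_m < C at a block start, so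
  any C with exp (2 C) \<le> c works.\<close>

lemma index_mult_mat_sum:
  assumes "A \<in> carrier_mat n k" "B \<in> carrier_mat k m" "i < n" "j < m"
  shows "(A * B) $$ (i,j) = (\<Sum>l<k. A $$ (i,l) * B $$ (l,j))"
  using assms by (simp add: scalar_prod_def atLeast0LessThan)

section \<open>Gram determinants\<close>

text \<open>Vectors of R^n are functions on nat of which only the coordinates below n matter; a
  family of d vectors is a function vs with vs a i the i-th coordinate of the a-th vector.\<close>
definition dot :: "nat \<Rightarrow> (nat \<Rightarrow> real) \<Rightarrow> (nat \<Rightarrow> real) \<Rightarrow> real" where
  "dot n v w = (\<Sum>i<n. v i * w i)"

definition gram :: "nat \<Rightarrow> nat \<Rightarrow> (nat \<Rightarrow> nat \<Rightarrow> real) \<Rightarrow> real mat" where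
  "gram n d vs = mat d d (\<lambda>(a,b). dot n (vs a) (vs b))"

definition gram_det :: "nat \<Rightarrow> nat \<Rightarrow> (nat \<Rightarrow> nat \<Rightarrow> real) \<Rightarrow> real" where
  "gram_det n d vs = det (gram n d vs)"

definition mat_apply :: "real mat \<Rightarrow> (nat \<Rightarrow> real) \<Rightarrow> nat \<Rightarrow> real" where
  "mat_apply g x = (\<lambda>i. \<Sum>j<dim_col g. g $$ (i,j) * x j)"

lemma dot_cong:
  "(\<And>i. i < n \<Longrightarrow> v i = v' i) \<Longrightarrow> (\<And>i. i < n \<Longrightarrow> w i = w' i) \<Longrightarrow> dot n v w = dot n v' w'"
  unfolding dot_def by (rule sum.cong) auto

lemma dot_commute: "dot n v w = dot n w v"
  unfolding dot_def by (simp add: mult.commute)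

lemma dot_self_nonneg: "dot n v v \<ge> 0"
  unfolding dot_def by (auto intro: sum_nonneg)

lemma dot_self_eq_0_iff: "dot n v v = 0 \<longleftrightarrow> (\<forall>i<n. v i = 0)"
  unfolding dot_def by (subst sum_nonneg_eq_0_iff) auto

lemma dot_sum_left: "dot n (\<lambda>i. \<Sum>p\<in>P. c p * w p i) v = (\<Sum>p\<in>P. c p * dot n (w p) v)"
proof -
  have "dot n (\<lambda>i. \<Sum>p\<in>P. c p * w p i) v = (\<Sum>i<n. \<Sum>p\<in>P. c p * w p i * v i)"
    unfolding dot_def by (simp add: sum_distrib_right)
  also have "\<dots> = (\<Sum>p\<in>P. \<Sum>i<n. c p * w p i * v i)" by (rule sum.swap)
  finally show ?thesis
    unfolding dot_def by (simp add: sum_distrib_left mult.assoc)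
qed

lemma dot_sum_right: "dot n v (\<lambda>i. \<Sum>p\<in>P. c p * w p i) = (\<Sum>p\<in>P. c p * dot n v (w p))"
  using dot_sum_left[of n c w P v] by (simp add: dot_commute)

lemma dot_add_left: "dot n (\<lambda>i. v i + w i) u = dot n v u + dot n w u"
  unfolding dot_def by (simp add: algebra_simps sum.distrib)

lemma dot_add_right: "dot n u (\<lambda>i. v i + w i) = dot n u v + dot n u w"
  unfolding dot_def by (simp add: algebra_simps sum.distrib)

lemma dot_diff_left: "dot n (\<lambda>i. v i - w i) u = dot n v u - dot n w u"
  unfolding dot_def by (simp add: algebra_simps sum_subtractf)

lemma gram_det_dot_cong:
  assumes "\<And>a b. a < d \<Longrightarrow> b < d \<Longrightarrow> dot n (vs a) (vs b) = dot n' (ws a) (ws b)"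
  shows "gram_det n d vs = gram_det n' d ws"
proof -
  have "gram n d vs = gram n' d ws" unfolding gram_def by (rule eq_matI) (auto simp: assms)
  thus ?thesis unfolding gram_det_def by simp
qed

lemma gram_det_cong:
  assumes "\<And>a i. a < d \<Longrightarrow> i < n \<Longrightarrow> vs a i = vs' a i"
  shows "gram_det n d vs = gram_det n d vs'"
  by (rule gram_det_dot_cong) (auto intro!: dot_cong assms)

lemma gram_det_orthonormal:
  assumes "\<And>a b. a < d \<Longrightarrow> b < d \<Longrightarrow> dot n (vs a) (vs b) = (if a = b then 1 else 0)"
  shows "gram_det n d vs = 1"
proof -
  have "gram n d vs = 1\<^sub>m d" unfolding gram_def by (rule eq_matI) (auto simp: assms)
  thus ?thesis unfolding gram_det_def by simp
qed

lemma gram_det_orthogonal: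
  assumes "\<And>a b. a < d \<Longrightarrow> b < d \<Longrightarrow> a \<noteq> b \<Longrightarrow> dot n (vs a) (vs b) = 0"
  shows "gram_det n d vs = (\<Prod>a<d. dot n (vs a) (vs a))"
proof -
  have G: "gram n d vs \<in> carrier_mat d d" unfolding gram_def by simp
  have "det (gram n d vs) = prod_list (diag_mat (gram n d vs))"
    by (rule det_upper_triangular[OF _ G]) (auto simp: upper_triangular_def gram_def assms)
  thus ?thesis unfolding gram_det_def prod_list_diag_prod
    by (simp add: gram_def atLeast0LessThan)
qed

lemma gram_det_lincomb:
  assumes T: "T \<in> carrier_mat d d"
  shows "gram_det n d (\<lambda>a i. \<Sum>b<d. T $$ (b,a) * vs b i) = det T ^ 2 * gram_det n d vs"
proof -
  let ?G = "gram n d vs"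
  have TT: "transpose_mat T \<in> carrier_mat d d" and G: "?G \<in> carrier_mat d d"
    using T by (auto simp: gram_def)
  have "gram n d (\<lambda>a i. \<Sum>b<d. T $$ (b,a) * vs b i) = transpose_mat T * ?G * T"
  proof (rule eq_matI)
    fix a a' assume "a < dim_row (transpose_mat T * ?G * T)"
      "a' < dim_col (transpose_mat T * ?G * T)"
    hence aa: "a < d" "a' < d" using T by auto
    have "(transpose_mat T * ?G * T) $$ (a,a')
        = (\<Sum>l<d. (transpose_mat T * ?G) $$ (a,l) * T $$ (l,a'))"
      by (rule index_mult_mat_sum[of _ d d]) (use T G aa in auto)
    also have "\<dots> = (\<Sum>l<d. (\<Sum>b<d. T $$ (b,a) * dot n (vs b) (vs l)) * T $$ (l,a'))"
      by (intro sum.cong refl, subst index_mult_mat_sum[of _ d d])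
        (use T aa in \<open>auto simp: gram_def\<close>)
    also have "\<dots> = (\<Sum>l<d. \<Sum>b<d. T $$ (b,a) * dot n (vs b) (vs l) * T $$ (l,a'))"
      by (simp add: sum_distrib_right)
    also have "\<dots> = (\<Sum>b<d. \<Sum>l<d. T $$ (b,a) * dot n (vs b) (vs l) * T $$ (l,a'))"
      by (rule sum.swap)
    also have "\<dots> = (\<Sum>b<d. T $$ (b,a) * (\<Sum>l<d. T $$ (l,a') * dot n (vs b) (vs l)))"
      by (simp add: sum_distrib_left mult.commute mult.left_commute)
    also have "\<dots> = dot n (\<lambda>i. \<Sum>b<d. T $$ (b,a) * vs b i) (\<lambda>i. \<Sum>b<d. T $$ (b,a') * vs b i)"
      by (simp add: dot_sum_left dot_sum_right)
    finally show "gram n d (\<lambda>a i. \<Sum>b<d. T $$ (b,a) * vs b i) $$ (a,a')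
        = (transpose_mat T * ?G * T) $$ (a,a')"
      using aa by (simp add: gram_def)
  qed (use T in \<open>simp_all add: gram_def\<close>)
  hence "gram_det n d (\<lambda>a i. \<Sum>b<d. T $$ (b,a) * vs b i) = det (transpose_mat T) * det ?G * det T"
    unfolding gram_det_def using T TT G by (simp add: det_mult[of _ d])
  thus ?thesis using det_transpose[OF T] by (simp add: gram_det_def power2_eq_square)
qed

lemma dot_mat_apply_orthogonal:
  assumes Y: "Y \<in> carrier_mat n n" "transpose_mat Y * Y = 1\<^sub>m n"
  shows "dot n (mat_apply Y x) (mat_apply Y y) = dot n x y"
proof -
  have cols: "(\<Sum>i<n. Y $$ (i,a) * Y $$ (i,b)) = (if a = b then 1 else 0)" if "a < n" "b < n" for a b
    using arg_cong[OF Y(2), of "\<lambda>M. M $$ (a,b)"] Y(1) that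
    by (simp add: scalar_prod_def atLeast0LessThan)
  have "dot n (mat_apply Y x) (mat_apply Y y)
      = (\<Sum>i<n. \<Sum>a<n. \<Sum>b<n. x a * y b * (Y $$ (i,a) * Y $$ (i,b)))"
    unfolding dot_def mat_apply_def sum_product using Y(1) by (intro sum.cong) (auto simp: mult_ac)
  also have "\<dots> = (\<Sum>a<n. \<Sum>b<n. \<Sum>i<n. x a * y b * (Y $$ (i,a) * Y $$ (i,b)))"
    by (subst sum.swap) (rule sum.cong[OF refl], rule sum.swap)
  also have "\<dots> = (\<Sum>a<n. \<Sum>b<n. x a * y b * (\<Sum>i<n. Y $$ (i,a) * Y $$ (i,b)))"
    by (simp add: sum_distrib_left)
  also have "\<dots> = (\<Sum>a<n. \<Sum>b<n. if a = b then x a * y b else 0)"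
    by (intro sum.cong refl) (simp add: cols)
  also have "\<dots> = (\<Sum>a<n. x a * y a)" by simp
  finally show ?thesis unfolding dot_def .
qed

definition in_span :: "(nat \<Rightarrow> nat \<Rightarrow> real) \<Rightarrow> nat \<Rightarrow> (nat \<Rightarrow> real) \<Rightarrow> bool" where
  "in_span F l w \<longleftrightarrow> (\<exists>c. w = (\<lambda>i. \<Sum>p<l. c p * F p i))"

lemma in_spanI: "w = (\<lambda>i. \<Sum>p<l. c p * F p i) \<Longrightarrow> in_span F l w"
  unfolding in_span_def by blast

lemma in_span_member: assumes "p < l" shows "in_span F l (F p)"
proof (rule in_spanI)
  show "F p = (\<lambda>i. \<Sum>p'<l. (if p' = p then 1 else 0) * F p' i)"
    using assms by (simp add: if_distrib[of "\<lambda>c. c * _"] cong: if_cong)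
qed

lemma in_span_mono: assumes "l \<le> l'" "in_span F l w" shows "in_span F l' w"
proof -
  from assms(2) obtain c where c: "w = (\<lambda>i. \<Sum>p<l. c p * F p i)" unfolding in_span_def by blast
  have "w = (\<lambda>i. \<Sum>p<l'. (if p < l then c p else 0) * F p i)"
    unfolding c using assms(1)
    by (intro ext sum.mono_neutral_cong_left) auto
  thus ?thesis by (rule in_spanI)
qed

lemma in_span_add: assumes "in_span F l v" "in_span F l w" shows "in_span F l (\<lambda>i. v i + w i)"
proof -
  from assms obtain c d where "v = (\<lambda>i. \<Sum>p<l. c p * F p i)" "w = (\<lambda>i. \<Sum>p<l. d p * F p i)"
    unfolding in_span_def by blast
  hence "(\<lambda>i. v i + w i) = (\<lambda>i. \<Sum>p<l. (c p + d p) * F p i)"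
    by (simp add: sum.distrib algebra_simps)
  thus ?thesis by (rule in_spanI)
qed

lemma in_span_diff: assumes "in_span F l v" "in_span F l w" shows "in_span F l (\<lambda>i. v i - w i)"
proof -
  from assms obtain c d where "v = (\<lambda>i. \<Sum>p<l. c p * F p i)" "w = (\<lambda>i. \<Sum>p<l. d p * F p i)"
    unfolding in_span_def by blast
  hence "(\<lambda>i. v i - w i) = (\<lambda>i. \<Sum>p<l. (c p - d p) * F p i)"
    by (simp add: sum_subtractf algebra_simps)
  thus ?thesis by (rule in_spanI)
qed

lemma in_span_lincomb:
  assumes "\<And>p. p < k \<Longrightarrow> in_span F l (W p)"
  shows "in_span F l (\<lambda>i. \<Sum>p<k. d p * W p i)"
proof -
  obtain c where c: "\<And>p. p < k \<Longrightarrow> W p = (\<lambda>i. \<Sum>q<l. c p q * F q i)"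
    using assms unfolding in_span_def by metis
  have "(\<lambda>i. \<Sum>p<k. d p * W p i) = (\<lambda>i. \<Sum>p<k. \<Sum>q<l. d p * c p q * F q i)"
    by (intro ext sum.cong refl) (simp add: c sum_distrib_left mult.assoc)
  also have "\<dots> = (\<lambda>i. \<Sum>q<l. (\<Sum>p<k. d p * c p q) * F q i)"
    by (subst sum.swap) (simp add: sum_distrib_right)
  finally show ?thesis by (rule in_spanI)
qed

text \<open>A degenerate step (a zero vector) gets the coefficient 0, as division by zero yields 0,
  so no independence hypothesis is needed.\<close>
fun gso :: "nat \<Rightarrow> (nat \<Rightarrow> nat \<Rightarrow> real) \<Rightarrow> nat \<Rightarrow> nat \<Rightarrow> real" where
  "gso n vs l = (\<lambda>i. vs l i -
     (\<Sum>p<l. dot n (vs l) (gso n vs p) / dot n (gso n vs p) (gso n vs p) * gso n vs p i))"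

declare gso.simps[simp del]

context
  fixes n :: nat and vs :: "nat \<Rightarrow> nat \<Rightarrow> real"
begin

definition gso_coeff :: "nat \<Rightarrow> nat \<Rightarrow> real" where
  "gso_coeff l p = dot n (vs l) (gso n vs p) / dot n (gso n vs p) (gso n vs p)"

lemma gso_eq: "gso n vs l = (\<lambda>i. vs l i - (\<Sum>p<l. gso_coeff l p * gso n vs p i))"
  by (subst gso.simps) (simp add: gso_coeff_def)

lemma vs_eq_gso_plus: "vs l i = gso n vs l i + (\<Sum>p<l. gso_coeff l p * gso n vs p i)"
  using fun_cong[OF gso_eq[of l], of i] by simp

lemma gso_orthogonal: "p < l \<Longrightarrow> dot n (gso n vs l) (gso n vs p) = 0"
proof (induction l arbitrary: p rule: less_induct)
  case (less l)
  have orth: "dot n (gso n vs p') (gso n vs p) = 0" if "p' < l" "p' \<noteq> p" for p'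
  proof (cases "p' < p")
    case True thus ?thesis using less.IH[OF less.prems True] by (simp add: dot_commute)
  next
    case False thus ?thesis using less.IH[OF that(1)] that(2) by simp
  qed
  have "dot n (gso n vs l) (gso n vs p)
      = dot n (vs l) (gso n vs p) - (\<Sum>p'<l. gso_coeff l p' * dot n (gso n vs p') (gso n vs p))"
    unfolding gso_eq[of l] dot_diff_left dot_sum_left ..
  also have "(\<Sum>p'<l. gso_coeff l p' * dot n (gso n vs p') (gso n vs p))
      = gso_coeff l p * dot n (gso n vs p) (gso n vs p)"
    by (subst sum.remove[of _ p]) (use less.prems orth in \<open>auto intro!: sum.neutral\<close>)
  also have "gso_coeff l p * dot n (gso n vs p) (gso n vs p) = dot n (vs l) (gso n vs p)"
  proof (cases "dot n (gso n vs p) (gso n vs p) = 0")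
    case True
    hence "\<forall>i<n. gso n vs p i = 0" by (simp add: dot_self_eq_0_iff)
    thus ?thesis using True by (simp add: dot_def)
  qed (simp add: gso_coeff_def)
  finally show ?case by simp
qed

lemma vs_minus_gso_in_span_gso: "in_span (gso n vs) l (\<lambda>i. vs l i - gso n vs l i)"
  by (rule in_spanI[where c = "gso_coeff l"]) (simp add: fun_eq_iff vs_eq_gso_plus[of l])

lemma vs_in_span_gso:
  assumes "p < l" shows "in_span (gso n vs) l (vs p)"
proof -
  have "in_span (gso n vs) l (\<lambda>i. gso n vs p i + (vs p i - gso n vs p i))"
    by (rule in_span_add[OF in_span_member[OF assms] in_span_mono[OF _ vs_minus_gso_in_span_gso]])
      (use assms in simp)
  thus ?thesis by simp
qed

lemma vs_minus_gso_in_span_vs: "in_span vs l (\<lambda>i. vs l i - gso n vs l i)"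
proof (induction l rule: less_induct)
  case (less l)
  have "in_span vs l (gso n vs p)" if "p < l" for p
  proof -
    have "in_span vs l (\<lambda>i. vs p i - (vs p i - gso n vs p i))"
      by (rule in_span_diff[OF in_span_member[OF that] in_span_mono[OF _ less.IH[OF that]]])
        (use that in simp)
    thus ?thesis by simp
  qed
  hence "in_span vs l (\<lambda>i. \<Sum>p<l. gso_coeff l p * gso n vs p i)"
    by (rule in_span_lincomb)
  moreover have "(\<lambda>i. vs l i - gso n vs l i) = (\<lambda>i. \<Sum>p<l. gso_coeff l p * gso n vs p i)"
    using vs_eq_gso_plus[of l] by (simp add: fun_eq_iff)
  ultimately show ?case by simp
qed

lemma gso_shortest:
  assumes "in_span vs l y"
  shows "dot n (gso n vs l) (gso n vs l) \<le> dot n (\<lambda>i. vs l i - y i) (\<lambda>i. vs l i - y i)"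
proof -
  obtain c where y: "y = (\<lambda>i. \<Sum>p<l. c p * vs p i)" using assms unfolding in_span_def by blast
  define z where "z = (\<lambda>i. (vs l i - gso n vs l i) - y i)"
  have "in_span (gso n vs) l y" unfolding y by (rule in_span_lincomb[OF vs_in_span_gso])
  hence "in_span (gso n vs) l z" unfolding z_def by (rule in_span_diff[OF vs_minus_gso_in_span_gso])
  then obtain d where "z = (\<lambda>i. \<Sum>p<l. d p * gso n vs p i)" unfolding in_span_def by blast
  hence "dot n (gso n vs l) z = 0" by (simp add: dot_sum_right gso_orthogonal)
  moreover have "(\<lambda>i. vs l i - y i) = (\<lambda>i. gso n vs l i + z i)" unfolding z_def by auto
  moreover have "dot n (\<lambda>i. gso n vs l i + z i) (\<lambda>i. gso n vs l i + z i)
      = dot n (gso n vs l) (gso n vs l) + 2 * dot n (gso n vs l) z + dot n z z"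
    by (simp add: dot_add_left dot_add_right dot_commute[of n z "gso n vs l"])
  ultimately show ?thesis using dot_self_nonneg[of n z] by simp
qed

lemma gram_det_eq_prod_gso: "gram_det n d vs = (\<Prod>l<d. dot n (gso n vs l) (gso n vs l))"
proof -
  define S where "S = mat d d (\<lambda>(b,a). if b = a then 1 else if b < a then gso_coeff a b else 0)"
  have S: "S \<in> carrier_mat d d" unfolding S_def by simp
  have "gram_det n d vs = gram_det n d (\<lambda>a i. \<Sum>b<d. S $$ (b,a) * gso n vs b i)"
  proof (rule gram_det_cong)
    fix a i assume a: "a < d"
    have "(\<Sum>b<d. S $$ (b,a) * gso n vs b i) = (\<Sum>b<Suc a. S $$ (b,a) * gso n vs b i)"
      by (rule sum.mono_neutral_right) (use a in \<open>auto simp: S_def\<close>)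
    also have "\<dots> = gso n vs a i + (\<Sum>b<a. gso_coeff a b * gso n vs b i)"
      using a by (simp add: S_def)
    finally show "vs a i = (\<Sum>b<d. S $$ (b,a) * gso n vs b i)" using vs_eq_gso_plus[of a i] by simp
  qed
  also have "\<dots> = det S ^ 2 * gram_det n d (gso n vs)" by (rule gram_det_lincomb[OF S])
  also have "det S = 1"
  proof -
    have "det S = prod_list (diag_mat S)"
      by (rule det_upper_triangular[OF _ S]) (auto simp: upper_triangular_def S_def)
    thus ?thesis unfolding prod_list_diag_prod using S by (simp add: S_def)
  qed
  also have "gram_det n d (gso n vs) = (\<Prod>l<d. dot n (gso n vs l) (gso n vs l))"
    by (rule gram_det_orthogonal) (metis dot_commute gso_orthogonal linorder_neqE_nat)
  finally show ?thesis by simp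
qed

end

lemma mat_apply_diff: "mat_apply Y (\<lambda>j. v j - w j) = (\<lambda>i. mat_apply Y v i - mat_apply Y w i)"
  unfolding mat_apply_def by (simp add: algebra_simps sum_subtractf)

lemma mat_apply_lincomb:
  "mat_apply Y (\<lambda>j. \<Sum>p<l. c p * vs p j) = (\<lambda>i. \<Sum>p<l. c p * mat_apply Y (vs p) i)"
proof
  fix i
  have "mat_apply Y (\<lambda>j. \<Sum>p<l. c p * vs p j) i = (\<Sum>j<dim_col Y. \<Sum>p<l. c p * (Y $$ (i,j) * vs p j))"
    unfolding mat_apply_def by (simp add: sum_distrib_left mult_ac)
  also have "\<dots> = (\<Sum>p<l. \<Sum>j<dim_col Y. c p * (Y $$ (i,j) * vs p j))" by (rule sum.swap)
  finally show "mat_apply Y (\<lambda>j. \<Sum>p<l. c p * vs p j) i = (\<Sum>p<l. c p * mat_apply Y (vs p) i)"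
    unfolding mat_apply_def by (simp add: sum_distrib_left)
qed

definition expands :: "real \<Rightarrow> real mat \<Rightarrow> bool" where
  "expands \<sigma> Y \<longleftrightarrow> (\<forall>x. \<sigma> * dot (dim_col Y) x x \<le> dot (dim_row Y) (mat_apply Y x) (mat_apply Y x))"

text \<open>The Gram--Schmidt residuals of the image family are images of residuals of the original
  family, so each of them grows by at least the factor \<sigma>.\<close>
lemma gram_det_mat_apply_ge:
  assumes Y: "Y \<in> carrier_mat n n" "expands \<sigma> Y" and \<sigma>: "\<sigma> \<ge> 0"
  shows "gram_det n d (\<lambda>a. mat_apply Y (vs a)) \<ge> \<sigma> ^ d * gram_det n d vs"
proof -
  let ?ws = "\<lambda>a. mat_apply Y (vs a)"
  have "\<sigma> * dot n (gso n vs l) (gso n vs l) \<le> dot n (gso n ?ws l) (gso n ?ws l)" for l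
  proof -
    obtain c where c: "(\<lambda>i. ?ws l i - gso n ?ws l i) = (\<lambda>i. \<Sum>p<l. c p * ?ws p i)"
      using vs_minus_gso_in_span_vs[of ?ws l n] unfolding in_span_def by blast
    define y where "y = (\<lambda>j. \<Sum>p<l. c p * vs p j)"
    have gso_ws: "gso n ?ws l = mat_apply Y (\<lambda>j. vs l j - y j)"
      using c unfolding y_def mat_apply_diff mat_apply_lincomb
        by (auto simp: fun_eq_iff algebra_simps)
    have "in_span vs l y" unfolding y_def by (rule in_spanI) (rule refl)
    hence "\<sigma> * dot n (gso n vs l) (gso n vs l) \<le> \<sigma> * dot n (\<lambda>j. vs l j - y j) (\<lambda>j. vs l j - y j)"
      by (intro mult_left_mono gso_shortest \<sigma>)
    also have "\<dots> \<le> dot n (gso n ?ws l) (gso n ?ws l)"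
      using Y unfolding expands_def gso_ws by auto
    finally show ?thesis .
  qed
  hence "(\<Prod>l<d. \<sigma> * dot n (gso n vs l) (gso n vs l)) \<le> (\<Prod>l<d. dot n (gso n ?ws l) (gso n ?ws l))"
    by (intro prod_mono) (simp add: \<sigma> dot_self_nonneg)
  thus ?thesis by (simp add: gram_det_eq_prod_gso prod.distrib)
qed

section \<open>Volumes of the first columns and of the last rows of a matrix\<close>

text \<open>col_gram N m g is the squared volume of the first m columns of g (the squared norm of
  g e_1 \<and> ... \<and> g e_m), row_gram N m g the squared volume of its last N - m rows.\<close>
definition col_gram :: "nat \<Rightarrow> nat \<Rightarrow> real mat \<Rightarrow> real" where
  "col_gram N m g = gram_det N m (\<lambda>l i. g $$ (i,l))"

definition row_gram :: "nat \<Rightarrow> nat \<Rightarrow> real mat \<Rightarrow> real" where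
  "row_gram N m g = gram_det N (N - m) (\<lambda>r c. g $$ (m + r, c))"

lemma SO_carrier: "k \<in> SO N \<Longrightarrow> k \<in> carrier_mat N N"
  unfolding SO_def by auto

lemma SO_transpose_mult: "k \<in> SO N \<Longrightarrow> transpose_mat k * k = 1\<^sub>m N"
  unfolding SO_def by (auto intro: mat_mult_left_right_inverse[of _ N])

lemma one_in_SO: "1\<^sub>m N \<in> SO N"
  unfolding SO_def by simp

lemma col_gram_mult_SO_left:
  assumes k: "k \<in> SO N" and g: "g \<in> carrier_mat N N" and m: "m \<le> N"
  shows "col_gram N m (k * g) = col_gram N m g"
  unfolding col_gram_def
proof (rule gram_det_dot_cong)
  fix a b assume "a < m" "b < m"
  hence ab: "a < N" "b < N" using m by auto
  have "dot N (\<lambda>i. (k * g) $$ (i,a)) (\<lambda>i. (k * g) $$ (i,b))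
      = dot N (mat_apply k (\<lambda>i. g $$ (i,a))) (mat_apply k (\<lambda>i. g $$ (i,b)))"
    by (rule dot_cong)
      (use SO_carrier[OF k] g ab in \<open>auto simp: mat_apply_def scalar_prod_def atLeast0LessThan\<close>)
  also have "\<dots> = dot N (\<lambda>i. g $$ (i,a)) (\<lambda>i. g $$ (i,b))"
    by (rule dot_mat_apply_orthogonal[OF SO_carrier[OF k] SO_transpose_mult[OF k]])
  finally show "dot N (\<lambda>i. (k * g) $$ (i,a)) (\<lambda>i. (k * g) $$ (i,b))
      = dot N (\<lambda>i. g $$ (i,a)) (\<lambda>i. g $$ (i,b))" .
qed

lemma col_gram_mult_block_upper_right:
  assumes x: "x \<in> carrier_mat N N" and h: "h \<in> carrier_mat N N" and m: "m \<le> N"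
    and lower_zero: "\<And>i l. m \<le> i \<Longrightarrow> i < N \<Longrightarrow> l < m \<Longrightarrow> h $$ (i,l) = 0"
  shows "col_gram N m (x * h) = det (mat m m (\<lambda>(a,l). h $$ (a,l))) ^ 2 * col_gram N m x"
proof -
  let ?T = "mat m m (\<lambda>(a,l). h $$ (a,l))"
  have "col_gram N m (x * h) = gram_det N m (\<lambda>l i. \<Sum>a<m. ?T $$ (a,l) * x $$ (i,a))"
    unfolding col_gram_def
  proof (rule gram_det_cong)
    fix l i assume l: "l < m" and i: "i < N"
    have "(x * h) $$ (i,l) = (\<Sum>a<N. x $$ (i,a) * h $$ (a,l))"
      by (rule index_mult_mat_sum[of _ N N _ N]) (use x h l i m in auto)
    also have "\<dots> = (\<Sum>a<m. x $$ (i,a) * h $$ (a,l))"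
      by (rule sum.mono_neutral_right) (use m lower_zero l in auto)
    finally show "(x * h) $$ (i,l) = (\<Sum>a<m. ?T $$ (a,l) * x $$ (i,a))"
      using l by (simp add: mult.commute)
  qed
  also have "\<dots> = det ?T ^ 2 * col_gram N m x"
    unfolding col_gram_def by (rule gram_det_lincomb) simp
  finally show ?thesis .
qed

lemma col_gram_diagonal:
  assumes d: "d \<in> carrier_mat N N" "diagonal_mat d" and m: "m \<le> N"
  shows "col_gram N m d = (\<Prod>i<m. (d $$ (i,i))\<^sup>2)"
proof -
  have "dot N (\<lambda>i. d $$ (i,a)) (\<lambda>i. d $$ (i,b)) = (if a = b then (d $$ (a,a))\<^sup>2 else 0)"
    if "a < m" "b < m" for a b
  proof -
    have "dot N (\<lambda>i. d $$ (i,a)) (\<lambda>i. d $$ (i,b))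
        = (\<Sum>i<N. if i = a then (if a = b then (d $$ (a,a))\<^sup>2 else 0) else 0)"
      unfolding dot_def
      by (rule sum.cong) (use d that m in \<open>auto simp: diagonal_mat_def power2_eq_square\<close>)
    thus ?thesis using that m by simp
  qed
  thus ?thesis unfolding col_gram_def
    by (subst gram_det_orthogonal) (auto intro!: prod.cong)
qed

lemma col_gram_one: "m \<le> N \<Longrightarrow> col_gram N m (1\<^sub>m N) = 1"
  by (subst col_gram_diagonal[of _ N]) (auto simp: diagonal_mat_def)

lemma col_gram_mult_expanding_left:
  assumes w: "w \<in> carrier_mat N N" "expands \<sigma> w" and M: "M \<in> carrier_mat N N"
    and m: "m \<le> N" and \<sigma>: "\<sigma> \<ge> 0"
  shows "col_gram N m (w * M) \<ge> \<sigma> ^ m * col_gram N m M"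
proof -
  have "col_gram N m (w * M) = gram_det N m (\<lambda>a. mat_apply w (\<lambda>i. M $$ (i,a)))"
    unfolding col_gram_def
    by (rule gram_det_cong)
      (use w M m in \<open>auto simp: mat_apply_def scalar_prod_def atLeast0LessThan\<close>)
  also have "\<dots> \<ge> \<sigma> ^ m * col_gram N m M"
    unfolding col_gram_def by (rule gram_det_mat_apply_ge[OF w \<sigma>])
  finally show ?thesis .
qed

lemma row_gram_mult_unitriangular_left:
  assumes u: "u \<in> carrier_mat N N" and Y: "Y \<in> carrier_mat N N" and m: "m \<le> N"
    and lower: "\<And>i j. j < i \<Longrightarrow> i < N \<Longrightarrow> u $$ (i,j) = 0"
    and diag: "\<And>i. i < N \<Longrightarrow> u $$ (i,i) = 1"
  shows "row_gram N m (u * Y) = row_gram N m Y"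
proof -
  let ?T = "mat (N-m) (N-m) (\<lambda>(b,a). u $$ (m+a, m+b))"
  have T: "?T \<in> carrier_mat (N-m) (N-m)" by simp
  have "row_gram N m (u * Y) = gram_det N (N-m) (\<lambda>a c. \<Sum>b<N-m. ?T $$ (b,a) * Y $$ (m+b, c))"
    unfolding row_gram_def
  proof (rule gram_det_cong)
    fix a c assume a: "a < N - m" and c: "c < N"
    have "(u * Y) $$ (m+a, c) = (\<Sum>l<N. u $$ (m+a,l) * Y $$ (l,c))"
      by (rule index_mult_mat_sum) (use u Y a c m in auto)
    also have "\<dots> = (\<Sum>l\<in>{m..<N}. u $$ (m+a,l) * Y $$ (l,c))"
      by (rule sum.mono_neutral_right) (use a lower in auto)
    also have "\<dots> = (\<Sum>b<N-m. u $$ (m+a,m+b) * Y $$ (m+b,c))"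
      by (simp add: sum.atLeastLessThan_shift_0 atLeast0LessThan)
    finally show "(u * Y) $$ (m+a, c) = (\<Sum>b<N-m. ?T $$ (b,a) * Y $$ (m+b, c))"
      using a by simp
  qed
  also have "\<dots> = det ?T ^ 2 * row_gram N m Y"
    unfolding row_gram_def by (rule gram_det_lincomb[OF T])
  also have "det ?T = 1"
  proof -
    have "det ?T = prod_list (diag_mat ?T)"
      by (rule det_lower_triangular[OF _ T]) (use lower in auto)
    thus ?thesis unfolding prod_list_diag_prod using diag m by simp
  qed
  finally show ?thesis by simp
qed

lemma SO_rows_orthonormal:
  assumes "k \<in> SO N" "a < N" "b < N"
  shows "(\<Sum>i<N. k $$ (a,i) * k $$ (b,i)) = (if a = b then 1 else 0)"
proof -
  have k: "k \<in> carrier_mat N N" "k * transpose_mat k = 1\<^sub>m N" using assms(1) unfolding SO_def by auto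
  have "(k * transpose_mat k) $$ (a,b) = (\<Sum>i<N. k $$ (a,i) * k $$ (b,i))"
    by (subst index_mult_mat_sum[of _ N N]) (use k assms in auto)
  thus ?thesis using k assms by simp
qed

lemma row_gram_SO: "k \<in> SO N \<Longrightarrow> m \<le> N \<Longrightarrow> row_gram N m k = 1"
  unfolding row_gram_def
  by (rule gram_det_orthonormal) (auto simp: dot_def SO_rows_orthonormal)

section \<open>Blocks and the unipotent group U\<close>

lemma blockstart_Suc:
  "blockstart ns (Suc k) = blockstart ns k + (if k < length ns then ns ! k else 0)"
  unfolding blockstart_def by (simp add: take_Suc_conv_app_nth)

lemma blockstart_mono: "k \<le> k' \<Longrightarrow> blockstart ns k \<le> blockstart ns k'"
proof (induction k' rule: dec_induct)
  case (step k') thus ?case using blockstart_Suc[of ns k'] by simp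
qed simp

lemma blockstart_length: "valid_blocks N ns \<Longrightarrow> blockstart ns (length ns) = N"
  unfolding blockstart_def valid_blocks_def by simp

lemma blockstart_le: "valid_blocks N ns \<Longrightarrow> k \<le> length ns \<Longrightarrow> blockstart ns k \<le> N"
  using blockstart_mono[of k "length ns" ns] blockstart_length by metis

lemma lessThan_blockstart_eq_UN_blocks: "{..<blockstart ns K} = (\<Union>k<K. block ns k)"
proof (induction K)
  case (Suc K)
  have "{..<blockstart ns (Suc K)} = {..<blockstart ns K} \<union> block ns K"
    using blockstart_mono[of K "Suc K" ns] by (auto simp: block_def)
  thus ?case using Suc.IH by (simp add: lessThan_Suc Un_commute)
qed (simp add: blockstart_def)

lemma in_some_block: "valid_blocks N ns \<Longrightarrow> l < N \<Longrightarrow> \<exists>k<length ns. l \<in> block ns k"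
  using lessThan_blockstart_eq_UN_blocks[of ns "length ns"] blockstart_length by blast

lemma block_index_ge:
  assumes "p \<in> block ns k" "blockstart ns j \<le> p"
  shows "j \<le> k"
proof (rule ccontr)
  assume "\<not> j \<le> k"
  hence "blockstart ns (Suc k) \<le> blockstart ns j" by (intro blockstart_mono) simp
  thus False using assms by (auto simp: block_def)
qed

lemma block_disjoint: "i \<noteq> j \<Longrightarrow> block ns i \<inter> block ns j = {}"
  using blockstart_mono[of "Suc i" j ns] blockstart_mono[of "Suc j" i ns]
  by (cases i j rule: linorder_cases) (auto simp: block_def)

lemma prod_lessThan_blockstart:
  "(\<Prod>i<blockstart ns K. f i) = (\<Prod>k<K. \<Prod>i\<in>block ns k. f i)"
  unfolding lessThan_blockstart_eq_UN_blocks
proof (rule prod.UNION_disjoint)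
  show "\<forall>i\<in>{..<K}. \<forall>j\<in>{..<K}. i \<noteq> j \<longrightarrow> block ns i \<inter> block ns j = {}"
    using block_disjoint by blast
qed (auto simp: block_def)

lemma U_blk_carrier: "u \<in> U_blk N ns \<Longrightarrow> u \<in> carrier_mat N N"
  unfolding U_blk_def SL_def by auto

lemma one_in_U_blk: "1\<^sub>m N \<in> U_blk N ns"
  unfolding U_blk_def SL_def by auto

lemma U_blk_unitriangular:
  assumes vb: "valid_blocks N ns" and u: "u \<in> U_blk N ns" and c: "c \<le> r" "r < N"
  shows "u $$ (r,c) = (if r = c then 1 else 0)"
proof -
  have uc: "u \<in> carrier_mat N N" by (rule U_blk_carrier[OF u])
  obtain k where k: "k < length ns" "c \<in> block ns k" using in_some_block[OF vb, of c] c by auto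
  let ?x = "unit_vec N c :: real vec"
  have "\<forall>i<N. i \<notin> block ns k \<longrightarrow> ?x $ i = 0" using k c by auto
  hence "\<forall>i<N. blockstart ns k \<le> i \<longrightarrow> (?x - u *\<^sub>v ?x) $ i = 0"
    using u k unfolding U_blk_def by auto
  moreover have "blockstart ns k \<le> r" using k c by (auto simp: block_def)
  moreover have "(u *\<^sub>v ?x) $ r = u $$ (r,c)"
    using uc c
    by (simp add: scalar_prod_def atLeast0LessThan if_distrib[of "\<lambda>x. _ * x"] cong: if_cong)
  ultimately show ?thesis using uc c by auto
qed

definition shear :: "nat \<Rightarrow> nat \<Rightarrow> nat \<Rightarrow> real \<Rightarrow> real mat" where
  "shear N i p s = mat N N (\<lambda>(r,c). (if r = c then 1 else 0) + (if r = i \<and> c = p then s else 0))"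

lemma shear_carrier [simp]: "shear N i p s \<in> carrier_mat N N"
  unfolding shear_def by simp

lemma det_shear: assumes "i < p" shows "det (shear N i p s) = 1"
proof -
  have "det (shear N i p s) = prod_list (diag_mat (shear N i p s))"
    by (rule det_upper_triangular[OF _ shear_carrier])
      (use assms in \<open>auto simp: upper_triangular_def shear_def\<close>)
  thus ?thesis unfolding prod_list_diag_prod using assms
    by (simp add: shear_def, intro prod.neutral) auto
qed

lemma shear_mult_vec:
  assumes "t < N" "x \<in> carrier_vec N" "p < N"
  shows "(shear N i p s *\<^sub>v x) $ t = x $ t + (if t = i then s * x $ p else 0)"
proof -
  have "(shear N i p s *\<^sub>v x) $ t
      = (\<Sum>c<N. ((if t = c then 1 else 0) + (if t = i \<and> c = p then s else 0)) * x $ c)"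
    using assms by (simp add: scalar_prod_def atLeast0LessThan shear_def)
  also have "\<dots> = (\<Sum>c<N. (if t = c then x $ c else 0) + (if t = i \<and> c = p then s * x $ c else 0))"
    by (rule sum.cong) (auto simp: distrib_right)
  also have "\<dots> = (\<Sum>c<N. (if t = c then x $ c else 0))
      + (\<Sum>c<N. (if t = i \<and> c = p then s * x $ c else 0))"
    by (simp only: sum.distrib)
  finally show ?thesis using assms by (cases "t = i") (simp_all add: sum.delta)
qed

lemma shear_in_U_blk:
  assumes j: "j \<le> length ns" and i: "i < blockstart ns j" and p: "blockstart ns j \<le> p" "p < N"
  shows "shear N i p s \<in> U_blk N ns"
  unfolding U_blk_def
proof (intro CollectI conjI allI impI ballI)
  show "shear N i p s \<in> SL N" unfolding SL_def using det_shear[of i p] i p by simp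
  fix k and x :: "real vec" and t assume k: "k < length ns" and x: "x \<in> carrier_vec N"
    and supp: "\<forall>i<N. i \<notin> block ns k \<longrightarrow> x $ i = 0" and t: "t < N" "blockstart ns k \<le> t"
  have "x $ p = 0" if "t = i"
  proof (rule ccontr)
    assume "x $ p \<noteq> 0"
    hence "j \<le> k" using supp p block_index_ge by blast
    thus False using blockstart_mono[of j k ns] that t i by simp
  qed
  moreover have "(x - shear N i p s *\<^sub>v x) $ t = x $ t - (shear N i p s *\<^sub>v x) $ t"
    using t by (simp add: shear_def)
  ultimately show "(x - shear N i p s *\<^sub>v x) $ t = 0" using t x p by (simp add: shear_mult_vec)
qed

section \<open>Orthogonal matrices keeping the volume of their last rows under U\<close>

lemma gram_det_orthogonal_change:
  assumes H: "\<And>a b. a < d \<Longrightarrow> b < d \<Longrightarrow> (\<Sum>c<d. H a c * H b c) = (if a = b then 1 else 0)"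
  shows "gram_det n d (\<lambda>a i. \<Sum>b<d. H a b * vs b i) = gram_det n d vs"
proof -
  let ?T = "mat d d (\<lambda>(b,a). H a b)"
  have T: "?T \<in> carrier_mat d d" by simp
  have "transpose_mat ?T * ?T = 1\<^sub>m d"
  proof (rule eq_matI)
    fix a b assume "a < dim_row (1\<^sub>m d)" "b < dim_col (1\<^sub>m d)"
    thus "(transpose_mat ?T * ?T) $$ (a,b) = 1\<^sub>m d $$ (a,b)"
      using H by (simp add: scalar_prod_def atLeast0LessThan)
  qed auto
  hence "det (transpose_mat ?T) * det ?T = 1"
    using det_mult[of "transpose_mat ?T" d ?T] T by simp
  hence "det ?T ^ 2 = 1" using det_transpose[OF T] by (simp add: power2_eq_square)
  moreover have "gram_det n d (\<lambda>a i. \<Sum>b<d. H a b * vs b i)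
      = gram_det n d (\<lambda>a i. \<Sum>b<d. ?T $$ (b,a) * vs b i)"
    by (rule gram_det_cong) simp
  ultimately show ?thesis using gram_det_lincomb[OF T, of n vs] by simp
qed

lemma dot_orthonormal_lincomb:
  fixes x H :: "nat \<Rightarrow> nat \<Rightarrow> real"
  assumes x: "\<And>a b. a < d \<Longrightarrow> b < d \<Longrightarrow> dot n (x a) (x b) = (if a = b then 1 else 0)"
    and H: "\<And>a b. a < d \<Longrightarrow> b < d \<Longrightarrow> (\<Sum>c<d. H a c * H b c) = (if a = b then 1 else 0)"
    and ab: "a < d" "b < d"
  shows "dot n (\<lambda>j. \<Sum>c<d. H a c * x c j) (\<lambda>j. \<Sum>c<d. H b c * x c j) = (if a = b then 1 else 0)"
proof -
  have "dot n (\<lambda>j. \<Sum>c<d. H a c * x c j) (\<lambda>j. \<Sum>c<d. H b c * x c j)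
      = (\<Sum>c<d. H a c * (\<Sum>c'<d. H b c' * dot n (x c) (x c')))"
    unfolding dot_sum_left dot_sum_right ..
  also have "\<dots> = (\<Sum>c<d. H a c * H b c)"
  proof (intro sum.cong refl)
    fix c assume c: "c \<in> {..<d}"
    hence "(\<Sum>c'<d. H b c' * dot n (x c) (x c')) = (\<Sum>c'<d. if c' = c then H b c else 0)"
      by (intro sum.cong refl) (auto simp: x)
    also have "\<dots> = H b c" using c by (simp add: sum.delta)
    finally show "H a c * (\<Sum>c'<d. H b c' * dot n (x c) (x c')) = H a c * H b c" by simp
  qed
  finally show ?thesis using H[OF ab] by simp
qed

text \<open>The Householder reflection I - 2 w w^T / |w|^2; for w = 0 it is the identity, since
  division by 0 yields 0.\<close>
definition reflection :: "nat \<Rightarrow> (nat \<Rightarrow> real) \<Rightarrow> nat \<Rightarrow> nat \<Rightarrow> real" where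
  "reflection n w a b = (if a = b then 1 else 0) - 2 * w a * w b / dot n w w"

lemma reflection_orthonormal:
  assumes ab: "a < n" "b < n"
  shows "(\<Sum>c<n. reflection n w a c * reflection n w b c) = (if a = b then 1 else 0)"
proof (cases "dot n w w = 0")
  case True
  thus ?thesis using ab by (simp add: reflection_def if_distrib[of "\<lambda>x. x * _"] cong: if_cong)
next
  case False
  let ?W = "dot n w w" and ?d = "\<lambda>a c. if a = c then 1 else (0::real)"
  have "reflection n w a c * reflection n w b c = ?d a c * ?d b c - 2 * w b / ?W * (?d a c * w c)
      - 2 * w a / ?W * (?d b c * w c) + 4 * w a * w b / ?W\<^sup>2 * (w c * w c)" for c
    unfolding reflection_def using False by (simp add: field_simps power2_eq_square)
  hence "(\<Sum>c<n. reflection n w a c * reflection n w b c) = (\<Sum>c<n. ?d a c * ?d b c)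
      - 2 * w b / ?W * (\<Sum>c<n. ?d a c * w c) - 2 * w a / ?W * (\<Sum>c<n. ?d b c * w c)
      + 4 * w a * w b / ?W\<^sup>2 * ?W"
    by (simp only: sum.distrib sum_subtractf sum_distrib_left[symmetric] dot_def)
  also have "\<dots> = (if a = b then 1 else 0) - 4 * w a * w b / ?W + 4 * w a * w b / ?W\<^sup>2 * ?W"
    using ab by (simp add: if_distrib[of "\<lambda>x. x * _"] cong: if_cong)
  finally show ?thesis using False by (simp add: power2_eq_square)
qed

lemma reflection_to_first_axis:
  fixes \<alpha> :: "nat \<Rightarrow> real"
  assumes n: "0 < n" and a: "a < n"
  defines "A \<equiv> sqrt (dot n \<alpha> \<alpha>)"
  defines "w \<equiv> \<lambda>r. \<alpha> r - (if r = 0 then A else 0)"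
  shows "(\<Sum>c<n. reflection n w a c * \<alpha> c) = (if a = 0 then A else 0)"
proof -
  have A2: "A\<^sup>2 = dot n \<alpha> \<alpha>" unfolding A_def by (simp add: dot_self_nonneg)
  have w\<alpha>: "dot n w \<alpha> = A\<^sup>2 - A * \<alpha> 0"
    using n A2 by (simp add: w_def dot_diff_left dot_def if_distrib[of "\<lambda>x. x * _"] cong: if_cong)
  have "dot n w w = (\<Sum>i<n. w i * \<alpha> i - (if i = 0 then A * w i else 0))"
    unfolding dot_def by (rule sum.cong) (auto simp: w_def algebra_simps)
  also have "\<dots> = dot n w \<alpha> - A * w 0"
    using n by (simp add: sum_subtractf dot_def)
  finally have ww: "dot n w w = 2 * (A\<^sup>2 - A * \<alpha> 0)"
    using w\<alpha> by (simp add: w_def power2_eq_square algebra_simps)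
  have "(\<Sum>c<n. reflection n w a c * \<alpha> c)
      = (\<Sum>c<n. (if a = c then \<alpha> c else 0) - 2 * w a / dot n w w * (w c * \<alpha> c))"
    unfolding reflection_def by (intro sum.cong refl) (simp add: algebra_simps)
  also have "\<dots> = \<alpha> a - 2 * w a / dot n w w * dot n w \<alpha>"
    using a unfolding dot_def by (simp add: sum_subtractf sum_distrib_left)
  also have "2 * w a / dot n w w * dot n w \<alpha> = w a"
  proof (cases "dot n w w = 0")
    case True
    thus ?thesis using a by (simp add: dot_self_eq_0_iff)
  qed (simp add: w\<alpha> ww field_simps)
  finally show ?thesis by (simp add: w_def)
qed

lemma sum_lessThan_eq_first_plus:
  fixes f :: "nat \<Rightarrow> 'a::comm_monoid_add"
  shows "0 < n \<Longrightarrow> (\<Sum>l<n. f l) = f 0 + (\<Sum>l\<in>{1..<n}. f l)"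
  using sum.atLeast_Suc_lessThan[of 0 n f] by (simp add: atLeast0LessThan)

definition arrow_mat :: "nat \<Rightarrow> real \<Rightarrow> (nat \<Rightarrow> real) \<Rightarrow> real mat" where
  "arrow_mat n a b = mat n n (\<lambda>(r,c). if r = 0 \<and> c = 0 then a else if r = 0 then b c
     else if c = 0 then b r else if r = c then 1 else 0)"

text \<open>Right multiplication by arrow_reduction n b subtracts b r times column r from column 0,
  for all r \<ge> 1.\<close>
definition arrow_reduction :: "nat \<Rightarrow> (nat \<Rightarrow> real) \<Rightarrow> real mat" where
  "arrow_reduction n b = mat n n (\<lambda>(r,c). if r = c then 1 else if c = 0 then - b r else 0)"

lemma arrow_mat_mult_reduction_index:
  assumes n: "0 < n" and r: "r < n" and c: "c < n"
  shows "(arrow_mat n a b * arrow_reduction n b) $$ (r,c)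
       = (if c = 0 then (if r = 0 then a - (\<Sum>l\<in>{1..<n}. (b l)\<^sup>2) else 0)
          else arrow_mat n a b $$ (r,c))"
proof -
  let ?M = "arrow_mat n a b" and ?T = "arrow_reduction n b"
  have e: "(?M * ?T) $$ (r,c) = ?M $$ (r,0) * ?T $$ (0,c) + (\<Sum>l\<in>{1..<n}. ?M $$ (r,l) * ?T $$ (l,c))"
    using index_mult_mat_sum[of ?M n n ?T n, OF _ _ r c] sum_lessThan_eq_first_plus[OF n]
    by (simp add: arrow_mat_def arrow_reduction_def)
  show ?thesis
  proof (cases "c = 0")
    case True
    have "(\<Sum>l\<in>{1..<n}. ?M $$ (r,l) * ?T $$ (l,c)) = (\<Sum>l\<in>{1..<n}. - (?M $$ (r,l) * b l))"
      by (rule sum.cong) (use True n in \<open>auto simp: arrow_reduction_def\<close>)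
    also have "\<dots> = (if r = 0 then - (\<Sum>l\<in>{1..<n}. (b l)\<^sup>2) else - b r)"
      using r by (auto simp: arrow_mat_def power2_eq_square sum_negf if_distrib[of "\<lambda>x. x * _"]
          cong: if_cong)
    finally show ?thesis using e True n r by (simp add: arrow_mat_def arrow_reduction_def)
  next
    case False
    have "(\<Sum>l\<in>{1..<n}. ?M $$ (r,l) * ?T $$ (l,c)) = (\<Sum>l\<in>{1..<n}. if l = c then ?M $$ (r,c) else 0)"
      by (rule sum.cong) (use False c in \<open>auto simp: arrow_reduction_def\<close>)
    thus ?thesis using e False c n by (simp add: arrow_reduction_def)
  qed
qed

lemma det_arrow_mat:
  assumes n: "0 < n"
  shows "det (arrow_mat n a b) = a - (\<Sum>r\<in>{1..<n}. (b r)\<^sup>2)"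
proof -
  let ?M = "arrow_mat n a b" and ?T = "arrow_reduction n b"
  note MT = arrow_mat_mult_reduction_index[OF n]
  have M: "?M \<in> carrier_mat n n" and T: "?T \<in> carrier_mat n n"
    unfolding arrow_mat_def arrow_reduction_def by simp_all
  have MTc: "?M * ?T \<in> carrier_mat n n" using M T by simp
  have "det (?M * ?T) = prod_list (diag_mat (?M * ?T))"
  proof (rule det_upper_triangular[OF _ MTc], unfold upper_triangular_def, intro allI impI)
    fix i j assume "i < dim_row (?M * ?T)" "j < i"
    thus "(?M * ?T) $$ (i,j) = 0" using M by (subst MT) (auto simp: arrow_mat_def)
  qed
  also have "\<dots> = (\<Prod>r<n. (?M * ?T) $$ (r,r))"
    unfolding prod_list_diag_prod using M by (simp add: atLeast0LessThan)
  also have "\<dots> = (\<Prod>r<n. if r = 0 then a - (\<Sum>l\<in>{1..<n}. (b l)\<^sup>2) else 1)"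
    by (rule prod.cong[OF refl], subst MT) (auto simp: arrow_mat_def)
  finally have "det (?M * ?T) = a - (\<Sum>l\<in>{1..<n}. (b l)\<^sup>2)" using n by (simp add: prod.delta)
  moreover have "det ?T = 1"
    using det_lower_triangular[OF _ T] T by (simp add: prod_list_diag_prod arrow_reduction_def)
  ultimately show ?thesis using det_mult[OF M T] by simp
qed

lemma dot_add_point:
  assumes "p < n"
  shows "dot n (\<lambda>c. u c + (if c = p then e else 0)) (\<lambda>c. v c + (if c = p then f else 0))
       = dot n u v + f * u p + e * v p + e * f"
  using assms by (simp add: dot_def sum.distrib algebra_simps if_distrib[of "\<lambda>x. x * _"]
      if_distrib[of "\<lambda>x. _ * x"] cong: if_cong)

lemma gram_det_orthonormal_perturbed:
  assumes orth: "\<And>a b. a < d \<Longrightarrow> b < d \<Longrightarrow> dot N (z a) (z b) = (if a = b then 1 else 0)"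
    and d: "0 < d" and p: "p < N"
  shows "gram_det N d (\<lambda>a c. z a c + (if c = p then (if a = 0 then t else 0) else 0))
       = 1 + 2 * t * z 0 p + t\<^sup>2 - t\<^sup>2 * (\<Sum>r\<in>{1..<d}. (z r p)\<^sup>2)"
proof -
  have "gram N d (\<lambda>a c. z a c + (if c = p then (if a = 0 then t else 0) else 0))
      = arrow_mat d (1 + 2 * t * z 0 p + t\<^sup>2) (\<lambda>r. t * z r p)"
  proof (rule eq_matI)
    fix a b assume "a < dim_row (arrow_mat d (1 + 2 * t * z 0 p + t\<^sup>2) (\<lambda>r. t * z r p))"
      "b < dim_col (arrow_mat d (1 + 2 * t * z 0 p + t\<^sup>2) (\<lambda>r. t * z r p))"
    hence ab: "a < d" "b < d" by (auto simp: arrow_mat_def)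
    thus "gram N d (\<lambda>a c. z a c + (if c = p then (if a = 0 then t else 0) else 0)) $$ (a,b)
        = arrow_mat d (1 + 2 * t * z 0 p + t\<^sup>2) (\<lambda>r. t * z r p) $$ (a,b)"
      using dot_add_point[OF p, of "z a" "if a = 0 then t else 0" "z b" "if b = 0 then t else 0"]
      by (auto simp: gram_def arrow_mat_def orth power2_eq_square)
  qed (auto simp: gram_def arrow_mat_def)
  thus ?thesis
    unfolding gram_det_def using det_arrow_mat[OF d]
      by (simp add: power_mult_distrib sum_distrib_left)
qed

lemma orthonormal_family_vanishes_below:
  assumes orth: "\<And>a b. a < d \<Longrightarrow> b < d \<Longrightarrow> dot N (z a) (z b) = (if a = b then 1 else 0)"
    and d: "d = N - m" "m \<le> N"
    and unit_cols: "\<And>p. m \<le> p \<Longrightarrow> p < N \<Longrightarrow> (\<Sum>r<d. (z r p)\<^sup>2) = 1"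
    and r: "r < d" and c: "c < m"
  shows "z r c = 0"
proof -
  have split: "(\<Sum>c<N. (z r c)\<^sup>2) = (\<Sum>c<m. (z r c)\<^sup>2) + (\<Sum>c\<in>{m..<N}. (z r c)\<^sup>2)" for r
    using d(2) by (subst sum.union_disjoint[symmetric]) (auto intro: sum.cong)
  have "(\<Sum>r<d. \<Sum>c<N. (z r c)\<^sup>2) = real d"
    using orth by (simp add: dot_def power2_eq_square)
  moreover have "(\<Sum>r<d. \<Sum>c\<in>{m..<N}. (z r c)\<^sup>2) = real d"
    using d unit_cols by (subst sum.swap) simp
  ultimately have "(\<Sum>r<d. \<Sum>c<m. (z r c)\<^sup>2) = 0"
    by (simp add: split sum.distrib)
  hence "(\<Sum>c<m. (z r c)\<^sup>2) = 0"
    using r by (simp add: sum_nonneg_eq_0_iff sum_nonneg)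
  thus ?thesis using c by (simp add: sum_nonneg_eq_0_iff)
qed

lemma row_gram_mult_shear:
  assumes k: "k \<in> carrier_mat N N" and i: "i < N" and p: "p < N"
    and H: "\<And>a b. a < N - m \<Longrightarrow> b < N - m \<Longrightarrow> (\<Sum>c<N - m. H a c * H b c) = (if a = b then 1 else 0)"
  shows "row_gram N m (k * shear N i p s) = gram_det N (N - m) (\<lambda>a c.
           (\<Sum>b<N - m. H a b * k $$ (m + b, c))
           + (if c = p then s * (\<Sum>b<N - m. H a b * k $$ (m + b, i)) else 0))"
proof -
  have "row_gram N m (k * shear N i p s)
      = gram_det N (N - m) (\<lambda>a c. k $$ (m + a, c) + (if c = p then s * k $$ (m + a, i) else 0))"
    unfolding row_gram_def
  proof (rule gram_det_cong)
    fix a c assume a: "a < N - m" and c: "c < N"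
    have "(k * shear N i p s) $$ (m + a, c) = (\<Sum>l<N. k $$ (m + a, l) * shear N i p s $$ (l, c))"
      by (rule index_mult_mat_sum[OF k shear_carrier]) (use a c in auto)
    also have "\<dots> = (\<Sum>l<N. (if l = c then k $$ (m + a, l) else 0)
        + (if l = i then (if c = p then s * k $$ (m + a, l) else 0) else 0))"
      by (rule sum.cong) (use c in \<open>auto simp: shear_def algebra_simps\<close>)
    finally show "(k * shear N i p s) $$ (m + a, c)
        = k $$ (m + a, c) + (if c = p then s * k $$ (m + a, i) else 0)"
      using c i by (simp add: sum.distrib)
  qed
  also have "\<dots> = gram_det N (N - m) (\<lambda>a c.
      \<Sum>b<N - m. H a b * (k $$ (m + b, c) + (if c = p then s * k $$ (m + b, i) else 0)))"
    by (rule gram_det_orthogonal_change[OF H, symmetric])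
  also have "\<dots> = gram_det N (N - m) (\<lambda>a c.
           (\<Sum>b<N - m. H a b * k $$ (m + b, c))
           + (if c = p then s * (\<Sum>b<N - m. H a b * k $$ (m + b, i)) else 0))"
    by (rule gram_det_cong) (simp add: distrib_left sum.distrib sum_distrib_left mult_ac)
  finally show ?thesis .
qed

text \<open>A reflection turns the last N - m rows of k into an orthonormal family z with
  z a i = (if a = 0 then A else 0) for some A > 0. The volume after the shear with parameter s is
  then 1 + 2 s A z 0 p + (s A)^2 (1 - (\<Sum>r\<ge>1. (z r p)^2)), which is constantly 1 only if all
  columns p \<ge> m of z are unit vectors; this leaves no room for z 0 i \<noteq> 0.\<close>
lemma SO_lower_left_block_zero:
  assumes k: "k \<in> SO N" and m: "m \<le> N"
    and row_gram_shear: "\<And>i p s. i < m \<Longrightarrow> m \<le> p \<Longrightarrow> p < N \<Longrightarrow> row_gram N m (k * shear N i p s) = 1"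
    and r: "m \<le> r" "r < N" and i: "i < m"
  shows "k $$ (r,i) = 0"
proof (rule ccontr)
  assume nz: "k $$ (r,i) \<noteq> 0"
  define d where "d = N - m"
  have d: "0 < d" using r by (simp add: d_def)
  define \<alpha> where "\<alpha> a = k $$ (m + a, i)" for a
  define A where "A = sqrt (dot d \<alpha> \<alpha>)"
  define H where "H = reflection d (\<lambda>a. \<alpha> a - (if a = 0 then A else 0))"
  define z where "z a c = (\<Sum>b<d. H a b * k $$ (m + b, c))" for a c
  have H: "(\<Sum>c<d. H a c * H b c) = (if a = b then 1 else 0)" if "a < d" "b < d" for a b
    unfolding H_def using that by (rule reflection_orthonormal)
  have z_i: "z a i = (if a = 0 then A else 0)" if "a < d" for a
    using reflection_to_first_axis[OF d that, of \<alpha>] unfolding z_def H_def A_def \<alpha>_def .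
  have "(\<alpha> (r - m))\<^sup>2 \<le> dot d \<alpha> \<alpha>"
    unfolding dot_def power2_eq_square[symmetric]
      by (rule member_le_sum) (use r in \<open>auto simp: d_def\<close>)
  moreover have "(\<alpha> (r - m))\<^sup>2 > 0" using nz r by (simp add: \<alpha>_def)
  ultimately have "dot d \<alpha> \<alpha> > 0" by linarith
  hence A: "A > 0" unfolding A_def by simp
  have z_orth: "dot N (z a) (z b) = (if a = b then 1 else 0)" if "a < d" "b < d" for a b
    unfolding z_def using dot_orthonormal_lincomb[OF _ H that, of N "\<lambda>c j. k $$ (m + c, j)"] k
    by (simp add: dot_def SO_rows_orthonormal d_def)
  have "(\<Sum>r<d. (z r p)\<^sup>2) = 1" if p: "m \<le> p" "p < N" for p
  proof -
    let ?S = "\<Sum>r\<in>{1..<d}. (z r p)\<^sup>2"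
    have "1 = 1 + 2 * (s * A) * z 0 p + (s * A)\<^sup>2 - (s * A)\<^sup>2 * ?S" for s
    proof -
      have "1 = gram_det N d (\<lambda>a c.
          z a c + (if c = p then s * (\<Sum>b<d. H a b * k $$ (m + b, i)) else 0))"
        using row_gram_mult_shear[OF SO_carrier[OF k], of i p m H s] row_gram_shear[OF i p, of s]
          H i m p
        unfolding z_def d_def by simp
      also have "\<dots>
          = gram_det N d (\<lambda>a c. z a c + (if c = p then (if a = 0 then s * A else 0) else 0))"
        by (rule gram_det_cong) (simp add: z_def[symmetric] z_i)
      finally show ?thesis using gram_det_orthonormal_perturbed[OF z_orth d p(2), of "s * A"]
        by simp
    qed
    from this[of 1] this[of "-1"] have "A * z 0 p = 0" "A\<^sup>2 * (1 - ?S) = 0"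
      by (simp_all add: power_mult_distrib algebra_simps)
    thus ?thesis using A sum_lessThan_eq_first_plus[OF d, of "\<lambda>r. (z r p)\<^sup>2"] by simp
  qed
  hence "z 0 i = 0"
    using orthonormal_family_vanishes_below[OF z_orth d_def m _ d i] by blast
  thus False using z_i[OF d] A by simp
qed

section \<open>G_hor preserves the volumes of the first blocks of columns\<close>

lemma row_gram_mult_U_blk_left:
  assumes vb: "valid_blocks N ns" and u: "u \<in> U_blk N ns"
    and Y: "Y \<in> carrier_mat N N" and m: "m \<le> N"
  shows "row_gram N m (u * Y) = row_gram N m Y"
  by (rule row_gram_mult_unitriangular_left[OF U_blk_carrier[OF u] Y m])
    (use U_blk_unitriangular[OF vb u] in auto)

lemma col_gram_mult_U_blk_right:
  assumes vb: "valid_blocks N ns" and u: "u \<in> U_blk N ns"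
    and x: "x \<in> carrier_mat N N" and m: "m \<le> N"
  shows "col_gram N m (x * u) = col_gram N m x"
proof -
  let ?T = "mat m m (\<lambda>(a,l). u $$ (a,l))"
  have "det ?T = prod_list (diag_mat ?T)"
    by (rule det_upper_triangular)
      (use m U_blk_unitriangular[OF vb u] in \<open>auto simp: upper_triangular_def\<close>)
  hence "det ?T = 1" unfolding prod_list_diag_prod using m U_blk_unitriangular[OF vb u] by simp
  thus ?thesis
    using col_gram_mult_block_upper_right[OF x U_blk_carrier[OF u] m] U_blk_unitriangular[OF vb u]
      by simp
qed

lemma col_gram_mult_block_upper_SO_right:
  assumes k: "k \<in> SO N" and x: "x \<in> carrier_mat N N" and m: "m \<le> N"
    and lower_zero: "\<And>i l. m \<le> i \<Longrightarrow> i < N \<Longrightarrow> l < m \<Longrightarrow> k $$ (i,l) = 0"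
  shows "col_gram N m (x * k) = col_gram N m x"
proof -
  let ?T = "mat m m (\<lambda>(a,l). k $$ (a,l))"
  have "col_gram N m k = col_gram N m (1\<^sub>m N)"
    using col_gram_mult_SO_left[OF k one_carrier_mat m] SO_carrier[OF k] by simp
  moreover have "col_gram N m k = det ?T ^ 2 * col_gram N m (1\<^sub>m N)"
    using col_gram_mult_block_upper_right[OF one_carrier_mat SO_carrier[OF k] m lower_zero]
      SO_carrier[OF k] by simp
  ultimately have "det ?T ^ 2 = 1" using col_gram_one[OF m] by simp
  thus ?thesis using col_gram_mult_block_upper_right[OF x SO_carrier[OF k] m lower_zero] by simp
qed

lemma G_hor_mult_UK:
  assumes "h \<in> G_hor N ns" "u \<in> U_blk N ns" "k \<in> SO N"
  obtains u' k' where "u' \<in> U_blk N ns" "k' \<in> SO N" "h * (u * k) = u' * k'"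
  using assms unfolding G_hor_def Let_def by blast

text \<open>For h = u k and v in U, the product h v lies again in U K; since left multiplication by
  U keeps the volume of the last rows, k v has the last-row volume 1 of an orthogonal matrix.\<close>
lemma G_hor_SO_factor_block_upper:
  assumes vb: "valid_blocks N ns" and h: "h \<in> G_hor N ns" and j: "j < length ns"
    and u: "u \<in> U_blk N ns" and k: "k \<in> SO N" and hk: "h = u * k"
    and r: "blockstart ns j \<le> r" "r < N" and i: "i < blockstart ns j"
  shows "k $$ (r,i) = 0"
proof (rule SO_lower_left_block_zero[OF k _ _ r i])
  let ?m = "blockstart ns j"
  show m: "?m \<le> N" using blockstart_le[OF vb] j by simp
  have "row_gram N ?m (k * v) = 1" if v: "v \<in> U_blk N ns" for v
  proof -
    obtain u' k' where u': "u' \<in> U_blk N ns" and k': "k' \<in> SO N" and e: "h * (v * 1\<^sub>m N) = u' * k'"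
      using G_hor_mult_UK[OF h v one_in_SO] .
    have "h * (v * 1\<^sub>m N) = u * (k * v)"
      using hk U_blk_carrier[OF u] U_blk_carrier[OF v] SO_carrier[OF k] by simp
    hence "row_gram N ?m (k * v) = row_gram N ?m (u' * k')"
      using e row_gram_mult_U_blk_left[OF vb u, of "k * v"] U_blk_carrier[OF v] SO_carrier[OF k] m
        by simp
    also have "\<dots> = 1"
      using row_gram_mult_U_blk_left[OF vb u' SO_carrier[OF k'] m] row_gram_SO[OF k' m] by simp
    finally show ?thesis .
  qed
  thus "\<And>i p s. i < ?m \<Longrightarrow> ?m \<le> p \<Longrightarrow> p < N \<Longrightarrow> row_gram N ?m (k * shear N i p s) = 1"
    using shear_in_U_blk[of j ns] j by simp
qed

lemma col_gram_mult_G_hor_right: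
  assumes vb: "valid_blocks N ns" and j: "j < length ns" and h: "h \<in> G_hor N ns"
    and x: "x \<in> carrier_mat N N"
  shows "col_gram N (blockstart ns j) (x * h) = col_gram N (blockstart ns j) x"
proof -
  let ?m = "blockstart ns j"
  have m: "?m \<le> N" using blockstart_le[OF vb] j by simp
  obtain u k where u: "u \<in> U_blk N ns" and k: "k \<in> SO N" and hk: "h * (1\<^sub>m N * 1\<^sub>m N) = u * k"
    using G_hor_mult_UK[OF h one_in_U_blk one_in_SO] .
  have hc: "h \<in> carrier_mat N N" using h unfolding G_hor_def SL_def Let_def by auto
  hence "h = u * k" using hk by simp
  hence "x * h = (x * u) * k" using x U_blk_carrier[OF u] SO_carrier[OF k] by simp
  moreover have "col_gram N ?m ((x * u) * k) = col_gram N ?m (x * u)"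
    by (rule col_gram_mult_block_upper_SO_right[OF k _ m])
      (use x U_blk_carrier[OF u] G_hor_SO_factor_block_upper[OF vb h j u k \<open>h = u * k\<close>] in auto)
  ultimately show ?thesis using col_gram_mult_U_blk_right[OF vb u x m] by simp
qed

section \<open>Volumes of columns over a compact subset of G/\<Gamma>\<close>

definition frob_sq :: "real mat \<Rightarrow> real" where
  "frob_sq Y = (\<Sum>i<dim_row Y. \<Sum>j<dim_col Y. (Y $$ (i,j))\<^sup>2)"

lemma frob_sq_nonneg: "frob_sq Y \<ge> 0"
  unfolding frob_sq_def by (intro sum_nonneg) simp

lemma dot_mat_apply_le:
  assumes "Y \<in> carrier_mat n n"
  shows "dot n (mat_apply Y x) (mat_apply Y x) \<le> frob_sq Y * dot n x x"
proof -
  have "dot n (mat_apply Y x) (mat_apply Y x) = (\<Sum>i<n. (\<Sum>j<n. Y $$ (i,j) * x j)\<^sup>2)"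
    using assms unfolding dot_def mat_apply_def by (simp add: power2_eq_square)
  also have "\<dots> \<le> (\<Sum>i<n. (\<Sum>j<n. (Y $$ (i,j))\<^sup>2) * (\<Sum>j<n. (x j)\<^sup>2))"
    by (rule sum_mono) (rule Cauchy_Schwarz_ineq_sum)
  finally show ?thesis
    using assms unfolding frob_sq_def dot_def by (simp add: sum_distrib_right power2_eq_square)
qed

lemma expands_left_inverse:
  assumes g: "g \<in> carrier_mat N N" and gi: "gi \<in> carrier_mat N N" and inv: "gi * g = 1\<^sub>m N"
  shows "expands (1 / (1 + frob_sq gi)) g"
  unfolding expands_def
proof
  fix x
  have F: "1 + frob_sq gi > 0" using frob_sq_nonneg[of gi] by linarith
  have "mat_apply gi (mat_apply g x) i = x i" if i: "i < N" for i
  proof -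
    have "mat_apply gi (mat_apply g x) i = (\<Sum>j<N. \<Sum>l<N. gi $$ (i,j) * g $$ (j,l) * x l)"
      using g gi unfolding mat_apply_def by (simp add: sum_distrib_left mult.assoc)
    also have "\<dots> = (\<Sum>l<N. \<Sum>j<N. gi $$ (i,j) * g $$ (j,l) * x l)" by (rule sum.swap)
    also have "\<dots> = (\<Sum>l<N. (gi * g) $$ (i,l) * x l)"
      using g gi i
        by (intro sum.cong refl) (simp add: scalar_prod_def atLeast0LessThan sum_distrib_right)
    finally show ?thesis using inv i by (simp add: if_distrib[of "\<lambda>c. c * _"] cong: if_cong)
  qed
  hence "dot N x x = dot N (mat_apply gi (mat_apply g x)) (mat_apply gi (mat_apply g x))"
    by (intro dot_cong) simp_all
  also have "\<dots> \<le> frob_sq gi * dot N (mat_apply g x) (mat_apply g x)"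
    by (rule dot_mat_apply_le[OF gi])
  also have "\<dots> \<le> (1 + frob_sq gi) * dot N (mat_apply g x) (mat_apply g x)"
    by (intro mult_right_mono) (simp_all add: dot_self_nonneg)
  finally show "1 / (1 + frob_sq gi) * dot (dim_col g) x x
      \<le> dot (dim_row g) (mat_apply g x) (mat_apply g x)"
    using g F by (simp add: field_simps)
qed

lemma dot_add_self_le: "dot n (\<lambda>i. u i + v i) (\<lambda>i. u i + v i) \<le> 2 * dot n u u + 2 * dot n v v"
proof -
  have "(u i + v i) * (u i + v i) \<le> 2 * (u i * u i) + 2 * (v i * v i)" for i
    using zero_le_square[of "u i - v i"] by (simp add: algebra_simps)
  hence "dot n (\<lambda>i. u i + v i) (\<lambda>i. u i + v i) \<le> (\<Sum>i<n. 2 * (u i * u i) + 2 * (v i * v i))"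
    unfolding dot_def by (intro sum_mono)
  thus ?thesis by (simp add: dot_def sum.distrib sum_distrib_left)
qed

lemma frob_sq_minus_commute:
  assumes "A \<in> carrier_mat n n" "B \<in> carrier_mat n n"
  shows "frob_sq (A - B) = frob_sq (B - A)"
  using assms unfolding frob_sq_def by (simp add: power2_commute)

lemma expands_near_invertible:
  assumes g0: "g0 \<in> carrier_mat N N" "det g0 \<noteq> 0"
  obtains \<epsilon> \<sigma> where "\<epsilon> > 0" "\<sigma> > 0"
    "\<And>w. w \<in> carrier_mat N N \<Longrightarrow> frob_sq (w - g0) < \<epsilon> \<Longrightarrow> expands \<sigma> w"
proof -
  obtain gi where gi: "gi \<in> carrier_mat N N" "gi * g0 = 1\<^sub>m N"
    using det_non_zero_imp_unit[OF g0] unfolding Units_def ring_mat_def by auto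
  define F where "F = 1 + frob_sq gi"
  have F: "F > 0" unfolding F_def using frob_sq_nonneg[of gi] by linarith
  have "expands (1 / (4 * F)) w"
    if w: "w \<in> carrier_mat N N" and near: "frob_sq (w - g0) < 1 / (4 * F)" for w
    unfolding expands_def
  proof
    fix x
    have "1 / F * dot N x x \<le> dot N (mat_apply g0 x) (mat_apply g0 x)"
      using expands_left_inverse[OF g0(1) gi] g0(1) unfolding expands_def F_def by simp
    also have "\<dots> \<le> 2 * dot N (mat_apply w x) (mat_apply w x)
        + 2 * dot N (mat_apply (g0 - w) x) (mat_apply (g0 - w) x)"
    proof -
      have "dot N (mat_apply g0 x) (mat_apply g0 x)
          = dot N (\<lambda>i. mat_apply w x i + mat_apply (g0 - w) x i)
            (\<lambda>i. mat_apply w x i + mat_apply (g0 - w) x i)"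
        by (rule dot_cong)
          (use w g0 in \<open>simp_all add: mat_apply_def sum.distrib[symmetric] algebra_simps\<close>)
      thus ?thesis using dot_add_self_le by simp
    qed
    also have "dot N (mat_apply (g0 - w) x) (mat_apply (g0 - w) x) \<le> 1 / (4 * F) * dot N x x"
    proof -
      have "dot N (mat_apply (g0 - w) x) (mat_apply (g0 - w) x) \<le> frob_sq (g0 - w) * dot N x x"
        by (rule dot_mat_apply_le) (use w g0 in auto)
      also have "\<dots> \<le> 1 / (4 * F) * dot N x x"
        using near frob_sq_minus_commute[OF w g0(1)]
          by (intro mult_right_mono) (simp_all add: dot_self_nonneg)
      finally show ?thesis .
    qed
    finally have "1 / F * dot N x x \<le> 2 * dot N (mat_apply w x) (mat_apply w x)
        + 2 * (1 / (4 * F) * dot N x x)"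
      by simp
    thus "1 / (4 * F) * dot (dim_col w) x x \<le> dot (dim_row w) (mat_apply w x) (mat_apply w x)"
      using w F by (simp add: field_simps)
  qed
  thus ?thesis using that[of "1 / (4 * F)" "1 / (4 * F)"] F by simp
qed

lemma det_Ints:
  assumes "A \<in> carrier_mat n n" "\<And>i j. i < n \<Longrightarrow> j < n \<Longrightarrow> A $$ (i,j) \<in> \<int>"
  shows "det (A :: real mat) \<in> \<int>"
  unfolding det_def'[OF assms(1)]
proof (intro Ints_sum Ints_mult Ints_prod)
  fix p i assume "p \<in> {p. p permutes {0..<n}}" "i \<in> {0..<n}"
  thus "A $$ (i, p i) \<in> \<int>" using assms(2) by (auto simp: permutes_in_image)
qed (simp add: sign_def)

text \<open>The volume of integer vectors is a positive integer.\<close>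
lemma col_gram_SLZ_ge_one:
  assumes \<delta>: "\<delta> \<in> SLZ N" and m: "m \<le> N"
  shows "col_gram N m \<delta> \<ge> 1"
proof -
  have \<delta>c: "\<delta> \<in> carrier_mat N N" and "det \<delta> \<noteq> 0" and \<delta>Z: "\<forall>i<N. \<forall>j<N. \<delta> $$ (i,j) \<in> \<int>"
    using \<delta> unfolding SLZ_def SL_def by auto
  then obtain \<delta>i where \<delta>i: "\<delta>i \<in> carrier_mat N N" "\<delta>i * \<delta> = 1\<^sub>m N"
    using det_non_zero_imp_unit[OF \<delta>c] unfolding Units_def ring_mat_def by auto
  define \<sigma> where "\<sigma> = 1 / (1 + frob_sq \<delta>i)"
  have \<sigma>: "\<sigma> > 0" unfolding \<sigma>_def using frob_sq_nonneg[of \<delta>i] by simp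
  have "0 < \<sigma> ^ m * col_gram N m (1\<^sub>m N)" using \<sigma> col_gram_one[OF m] by simp
  also have "\<dots> \<le> col_gram N m (\<delta> * 1\<^sub>m N)"
    using col_gram_mult_expanding_left[OF \<delta>c expands_left_inverse[OF \<delta>c \<delta>i] one_carrier_mat m] \<sigma>
    unfolding \<sigma>_def by simp
  finally have pos: "col_gram N m \<delta> > 0" using \<delta>c by simp
  have "col_gram N m \<delta> \<in> \<int>"
    unfolding col_gram_def gram_det_def
    by (rule det_Ints) (use \<delta>Z m in \<open>auto simp: gram_def dot_def intro!: Ints_sum Ints_mult\<close>)
  then obtain z :: int where "col_gram N m \<delta> = of_int z" by (auto elim: Ints_cases)
  thus ?thesis using pos by simp
qed

lemma SL_carrier: "a \<in> SL N \<Longrightarrow> a \<in> carrier_mat N N"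
  unfolding SL_def by auto

lemma SL_mult: "a \<in> SL N \<Longrightarrow> b \<in> SL N \<Longrightarrow> a * b \<in> SL N"
  unfolding SL_def by (auto simp: det_mult)

lemma mat_subgroup_carrier: "mat_subgroup N H \<Longrightarrow> g \<in> H \<Longrightarrow> g \<in> carrier_mat N N"
  unfolding mat_subgroup_def SL_def by auto

lemma lcoset_mult:
  assumes H: "mat_subgroup N H" and x: "x \<in> carrier_mat N N" and g: "g \<in> H"
  shows "lcoset H (x * g) = lcoset H x"
proof -
  have Hc: "\<And>a. a \<in> H \<Longrightarrow> a \<in> carrier_mat N N" using mat_subgroup_carrier[OF H] .
  have Hm: "\<And>a b. a \<in> H \<Longrightarrow> b \<in> H \<Longrightarrow> a * b \<in> H" using H unfolding mat_subgroup_def by auto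
  obtain g' where g': "g' \<in> H" "g * g' = 1\<^sub>m N" using H g unfolding mat_subgroup_def by blast
  show ?thesis unfolding lcoset_def
  proof (intro equalityI subsetI)
    fix y assume "y \<in> (\<lambda>h. x * g * h) ` H"
    then obtain h where h: "h \<in> H" "y = x * g * h" by auto
    hence "y = x * (g * h)" using x Hc[OF g] Hc[OF h(1)] by simp
    thus "y \<in> (\<lambda>h. x * h) ` H" using Hm[OF g h(1)] by auto
  next
    fix y assume "y \<in> (\<lambda>h. x * h) ` H"
    then obtain h where h: "h \<in> H" "y = x * h" by auto
    have "x * g * (g' * h) = x * (g * g') * h"
      using x Hc[OF g] Hc[OF g'(1)] Hc[OF h(1)] by (simp add: assoc_mult_mat[of _ N N _ N _ N])
    also have "\<dots> = y" using g'(2) h x by simp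
    finally show "y \<in> (\<lambda>h. x * g * h) ` H" using Hm[OF g'(1) h(1)]
      by (auto intro!: image_eqI[of _ _ "g' * h"])
  qed
qed

lemma lcoset_eqD:
  assumes H: "mat_subgroup N H" and x: "x \<in> carrier_mat N N" and e: "lcoset H x = lcoset H w"
  shows "\<exists>g\<in>H. x = w * g"
proof -
  have "x * 1\<^sub>m N \<in> lcoset H x" using H unfolding mat_subgroup_def lcoset_def by auto
  thus ?thesis using x e unfolding lcoset_def by auto
qed

lemma openin_quot_top:
  "openin (quot_top X f) U \<longleftrightarrow> U \<subseteq> f ` topspace X \<and> openin X {x \<in> topspace X. f x \<in> U}"
  unfolding quot_top_def by (simp add: istopology_quot_top)

lemma topspace_quot_top: "topspace (quot_top X f) = f ` topspace X"
proof
  show "topspace (quot_top X f) \<subseteq> f ` topspace X"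
    unfolding topspace_def openin_quot_top by auto
  have "{x \<in> topspace X. f x \<in> f ` topspace X} = topspace X" by auto
  hence "openin (quot_top X f) (f ` topspace X)" unfolding openin_quot_top by auto
  thus "f ` topspace X \<subseteq> topspace (quot_top X f)" by (rule openin_subset)
qed

lemma topspace_G_top: "topspace (G_top N) = SL N"
  unfolding G_top_def topspace_pullback_topology by simp

lemma openin_G_top_near:
  assumes \<gamma>: "\<gamma> \<in> carrier_mat N N" and g0: "g0 \<in> carrier_mat N N"
  shows "openin (G_top N) {x \<in> SL N. frob_sq (x * \<gamma> - g0) < \<epsilon>}"
proof -
  define \<Phi> where "\<Phi> f = (\<Sum>i<N. \<Sum>j<N. ((\<Sum>l<N. f (i,l) * \<gamma> $$ (l,j)) - g0 $$ (i,j))\<^sup>2)"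
    for f :: "nat \<times> nat \<Rightarrow> real"
  let ?E = "product_topology (\<lambda>_. euclideanreal) (UNIV :: (nat \<times> nat) set)"
  have "continuous_map ?E euclideanreal \<Phi>"
    unfolding \<Phi>_def by (intro continuous_intros) auto
  hence "openin ?E {f \<in> topspace ?E. \<Phi> f \<in> {..<\<epsilon>}}"
    by (rule openin_continuous_map_preimage) simp
  moreover have "\<Phi> (entries N x) = frob_sq (x * \<gamma> - g0)" if "x \<in> SL N" for x
    unfolding \<Phi>_def frob_sq_def using SL_carrier[OF that] \<gamma> g0
    by (intro sum.cong refl)
      (auto simp: entries_def scalar_prod_def atLeast0LessThan intro!: sum.cong)
  hence "{x \<in> SL N. frob_sq (x * \<gamma> - g0) < \<epsilon>} = entries N -` {f \<in> topspace ?E. \<Phi> f \<in> {..<\<epsilon>}} \<inter> SL N"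
    by auto
  ultimately show ?thesis unfolding G_top_def openin_pullback_topology by blast
qed

lemma openin_quotient_near:
  assumes H: "mat_subgroup N H" and g0: "g0 \<in> SL N"
  shows "openin (quot_top (G_top N) (lcoset H)) (lcoset H ` {w \<in> SL N. frob_sq (w - g0) < \<epsilon>})"
proof -
  let ?W = "{w \<in> SL N. frob_sq (w - g0) < \<epsilon>}"
  have "{x \<in> topspace (G_top N). lcoset H x \<in> lcoset H ` ?W}
      = (\<Union>\<gamma>\<in>H. {x \<in> SL N. frob_sq (x * \<gamma> - g0) < \<epsilon>})"
  proof (intro equalityI subsetI)
    fix x assume "x \<in> {x \<in> topspace (G_top N). lcoset H x \<in> lcoset H ` ?W}"
    then obtain w where x: "x \<in> SL N" and w: "w \<in> ?W" "lcoset H w = lcoset H x"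
      unfolding topspace_G_top by auto
    then obtain \<gamma> where "\<gamma> \<in> H" "w = x * \<gamma>"
      using lcoset_eqD[OF H _ w(2)] SL_carrier by blast
    thus "x \<in> (\<Union>\<gamma>\<in>H. {x \<in> SL N. frob_sq (x * \<gamma> - g0) < \<epsilon>})" using x w(1) by blast
  next
    fix x assume "x \<in> (\<Union>\<gamma>\<in>H. {x \<in> SL N. frob_sq (x * \<gamma> - g0) < \<epsilon>})"
    then obtain \<gamma> where \<gamma>: "\<gamma> \<in> H" "x \<in> SL N" "frob_sq (x * \<gamma> - g0) < \<epsilon>" by blast
    have "x * \<gamma> \<in> ?W" using SL_mult[OF \<gamma>(2)] \<gamma>(1,3) H unfolding mat_subgroup_def by auto
    moreover have "lcoset H (x * \<gamma>) = lcoset H x"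
      by (rule lcoset_mult[OF H SL_carrier[OF \<gamma>(2)] \<gamma>(1)])
    ultimately show "x \<in> {x \<in> topspace (G_top N). lcoset H x \<in> lcoset H ` ?W}"
      using \<gamma>(2) unfolding topspace_G_top by (auto intro: image_eqI[of _ _ "x * \<gamma>"])
  qed
  moreover have "openin (G_top N) (\<Union>\<gamma>\<in>H. {x \<in> SL N. frob_sq (x * \<gamma> - g0) < \<epsilon>})"
    using openin_G_top_near mat_subgroup_carrier[OF H] SL_carrier[OF g0] by blast
  moreover have "lcoset H ` ?W \<subseteq> lcoset H ` topspace (G_top N)"
    unfolding topspace_G_top by auto
  ultimately show ?thesis unfolding openin_quot_top by simp
qed

lemma compactin_quotient_near_cover:
  assumes H: "mat_subgroup N H" and B: "compactin (quot_top (G_top N) (lcoset H)) B"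
    and \<epsilon>: "\<And>g0. g0 \<in> SL N \<Longrightarrow> \<epsilon> g0 > 0"
  obtains G0 where "finite G0" "G0 \<subseteq> SL N"
    "\<forall>g\<in>carrier_mat N N. lcoset H g \<in> B \<longrightarrow>
       (\<exists>g0\<in>G0. \<exists>w\<in>SL N. \<exists>\<gamma>\<in>H. g = w * \<gamma> \<and> frob_sq (w - g0) < \<epsilon> g0)"
proof -
  define V where "V g0 = lcoset H ` {w \<in> SL N. frob_sq (w - g0) < \<epsilon> g0}" for g0
  have openV: "openin (quot_top (G_top N) (lcoset H)) (V g0)" if "g0 \<in> SL N" for g0
    unfolding V_def by (rule openin_quotient_near[OF H that])
  have "B \<subseteq> \<Union> (V ` SL N)"
  proof
    fix y assume "y \<in> B"
    then obtain g0 where g0: "g0 \<in> SL N" "y = lcoset H g0"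
      using compactin_subset_topspace[OF B] unfolding topspace_quot_top topspace_G_top by auto
    hence "g0 \<in> {w \<in> SL N. frob_sq (w - g0) < \<epsilon> g0}"
      using \<epsilon>[OF g0(1)] SL_carrier[OF g0(1)] unfolding frob_sq_def by simp
    thus "y \<in> \<Union> (V ` SL N)" unfolding V_def using g0 by blast
  qed
  then obtain F where F: "finite F" "F \<subseteq> V ` SL N" "B \<subseteq> \<Union> F"
    using B openV unfolding compactin_def by (metis (no_types, lifting) imageE)
  then obtain G0 where G0: "G0 \<subseteq> SL N" "finite G0" "F = V ` G0"
    using finite_subset_image by metis
  show ?thesis
  proof (rule that[OF G0(2,1)], intro ballI impI)
    fix g assume g: "g \<in> carrier_mat N N" "lcoset H g \<in> B"
    then obtain g0 where g0: "g0 \<in> G0" "lcoset H g \<in> V g0" using F(3) G0(3) by blast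
    then obtain w where w: "w \<in> SL N" "frob_sq (w - g0) < \<epsilon> g0" "lcoset H g = lcoset H w"
      unfolding V_def by auto
    then obtain \<gamma> where "\<gamma> \<in> H" "g = w * \<gamma>" using lcoset_eqD[OF H g(1)] by blast
    thus "\<exists>g0\<in>G0. \<exists>w\<in>SL N. \<exists>\<gamma>\<in>H. g = w * \<gamma> \<and> frob_sq (w - g0) < \<epsilon> g0"
      using g0(1) w(1,2) by blast
  qed
qed

lemma expands_near_SL:
  obtains \<epsilon> \<sigma> where "\<And>g0. g0 \<in> SL N \<Longrightarrow> \<epsilon> g0 > 0" "\<And>g0. g0 \<in> SL N \<Longrightarrow> \<sigma> g0 > 0"
    "\<And>g0 w. g0 \<in> SL N \<Longrightarrow> w \<in> carrier_mat N N \<Longrightarrow> frob_sq (w - g0) < \<epsilon> g0 \<Longrightarrow> expands (\<sigma> g0) w"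
proof -
  define P where "P g0 \<epsilon>\<sigma> \<longleftrightarrow> fst \<epsilon>\<sigma> > 0 \<and> snd \<epsilon>\<sigma> > 0 \<and>
      (\<forall>w. w \<in> carrier_mat N N \<longrightarrow> frob_sq (w - g0) < fst \<epsilon>\<sigma> \<longrightarrow> expands (snd \<epsilon>\<sigma>) w)"
    for g0 and \<epsilon>\<sigma> :: "real \<times> real"
  have "\<exists>\<epsilon>\<sigma>. P g0 \<epsilon>\<sigma>" if "g0 \<in> SL N" for g0
  proof -
    have g0: "g0 \<in> carrier_mat N N" "det g0 \<noteq> 0" using that unfolding SL_def by auto
    obtain \<epsilon> \<sigma> where "\<epsilon> > 0" "\<sigma> > 0"
      "\<And>w. w \<in> carrier_mat N N \<Longrightarrow> frob_sq (w - g0) < \<epsilon> \<Longrightarrow> expands \<sigma> w"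
      using expands_near_invertible[OF g0] by blast
    thus ?thesis unfolding P_def by (intro exI[of _ "(\<epsilon>, \<sigma>)"]) auto
  qed
  then obtain p where "\<forall>g0\<in>SL N. P g0 (p g0)" using bchoice[of "SL N" P] by blast
  thus ?thesis using that[of "\<lambda>g0. fst (p g0)" "\<lambda>g0. snd (p g0)"] unfolding P_def by blast
qed

lemma col_gram_mult_SLZ_ge:
  assumes w: "w \<in> carrier_mat N N" "expands \<sigma>\<^sub>w w" and \<rho>: "\<rho> \<in> carrier_mat N N" "expands \<sigma>\<^sub>\<rho> \<rho>"
    and \<delta>: "\<delta> \<in> SLZ N" and m: "m \<le> N"
    and \<sigma>: "0 < \<sigma>" "\<sigma> \<le> 1" "\<sigma> \<le> \<sigma>\<^sub>w" "\<sigma> \<le> \<sigma>\<^sub>\<rho>"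
  shows "col_gram N m (w * (\<rho> * \<delta>)) \<ge> \<sigma> ^ (2 * N)"
proof -
  have \<delta>c: "\<delta> \<in> carrier_mat N N" using \<delta> unfolding SLZ_def SL_def by auto
  have "\<sigma> ^ (2 * N) \<le> \<sigma> ^ m * \<sigma> ^ m"
    using \<sigma> m by (simp add: power_add[symmetric] mult_2 power_decreasing)
  also have "\<dots> \<le> \<sigma>\<^sub>w ^ m * (\<sigma>\<^sub>\<rho> ^ m * col_gram N m \<delta>)"
  proof (intro mult_mono)
    have "\<sigma> ^ m \<le> \<sigma>\<^sub>\<rho> ^ m" using \<sigma> by (intro power_mono) auto
    also have "\<dots> \<le> \<sigma>\<^sub>\<rho> ^ m * col_gram N m \<delta>"
      using mult_left_mono[OF col_gram_SLZ_ge_one[OF \<delta> m], of "\<sigma>\<^sub>\<rho> ^ m"] \<sigma> by simp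
    finally show "\<sigma> ^ m \<le> \<sigma>\<^sub>\<rho> ^ m * col_gram N m \<delta>" .
  qed (use \<sigma> in \<open>auto intro: power_mono\<close>)
  also have "\<dots> \<le> \<sigma>\<^sub>w ^ m * col_gram N m (\<rho> * \<delta>)"
    using col_gram_mult_expanding_left[OF \<rho> \<delta>c m] \<sigma> by (intro mult_left_mono) auto
  also have "\<dots> \<le> col_gram N m (w * (\<rho> * \<delta>))"
    using col_gram_mult_expanding_left[OF w _ m] \<rho>(1) \<delta>c \<sigma> by simp
  finally show ?thesis .
qed

text \<open>Near every point of the compact set the coset representatives expand uniformly, and
  elements of H differ from integer matrices by finitely many matrices of R.\<close>
lemma col_gram_lower_bound_on_compact:
  assumes H: "mat_subgroup N H" and R: "finite R" "R \<subseteq> SL N"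
    and H_R_SLZ: "\<And>\<gamma>. \<gamma> \<in> H \<Longrightarrow> \<exists>\<rho>\<in>R. \<exists>\<delta>\<in>SLZ N. \<gamma> = \<rho> * \<delta>"
    and B: "compactin (quot_top (G_top N) (lcoset H)) B"
  obtains c where "c > 0"
    "\<forall>g\<in>carrier_mat N N. lcoset H g \<in> B \<longrightarrow> (\<forall>m\<le>N. col_gram N m g \<ge> c)"
proof -
  obtain \<epsilon> \<sigma> where \<epsilon>: "\<And>g0. g0 \<in> SL N \<Longrightarrow> \<epsilon> g0 > 0" and \<sigma>: "\<And>g0. g0 \<in> SL N \<Longrightarrow> \<sigma> g0 > 0"
    and near: "\<And>g0 w. g0 \<in> SL N \<Longrightarrow> w \<in> carrier_mat N N \<Longrightarrow> frob_sq (w - g0) < \<epsilon> g0 \<Longrightarrow> expands (\<sigma> g0) w"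
    using expands_near_SL[of N] by blast
  obtain G0 where G0: "finite G0" "G0 \<subseteq> SL N"
    and cover: "\<forall>g\<in>carrier_mat N N. lcoset H g \<in> B \<longrightarrow>
       (\<exists>g0\<in>G0. \<exists>w\<in>SL N. \<exists>\<gamma>\<in>H. g = w * \<gamma> \<and> frob_sq (w - g0) < \<epsilon> g0)"
    by (rule compactin_quotient_near_cover[OF H B \<epsilon>])
  define \<sigma>0 where "\<sigma>0 = Min (insert 1 (\<sigma> ` (G0 \<union> R)))"
  have fin: "finite (insert 1 (\<sigma> ` (G0 \<union> R)))" using G0 R by simp
  have \<sigma>0: "\<sigma>0 > 0" "\<sigma>0 \<le> 1" "\<And>g. g \<in> G0 \<union> R \<Longrightarrow> \<sigma>0 \<le> \<sigma> g"
    unfolding \<sigma>0_def using fin \<sigma> G0(2) R(2) by (auto simp: Min_gr_iff)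
  show ?thesis
  proof (rule that[of "\<sigma>0 ^ (2 * N)"])
    show "\<sigma>0 ^ (2 * N) > 0" using \<sigma>0 by simp
    show "\<forall>g\<in>carrier_mat N N. lcoset H g \<in> B \<longrightarrow> (\<forall>m\<le>N. \<sigma>0 ^ (2 * N) \<le> col_gram N m g)"
    proof (intro ballI impI allI)
    fix g m assume g: "g \<in> carrier_mat N N" "lcoset H g \<in> B" and m: "m \<le> N"
    obtain g0 w \<gamma> where g0: "g0 \<in> G0" and w: "w \<in> SL N" and \<gamma>: "\<gamma> \<in> H" and "g = w * \<gamma>"
      and "frob_sq (w - g0) < \<epsilon> g0"
      using cover g by blast
    hence exp_w: "expands (\<sigma> g0) w" using near G0(2) SL_carrier[OF w] by blast
    obtain \<rho> \<delta> where \<rho>: "\<rho> \<in> R" and \<delta>: "\<delta> \<in> SLZ N" and "g = w * (\<rho> * \<delta>)"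
      using H_R_SLZ[OF \<gamma>] \<open>g = w * \<gamma>\<close> by blast
    have \<rho>SL: "\<rho> \<in> SL N" using \<rho> R(2) by auto
    have "expands (\<sigma> \<rho>) \<rho>"
      using near[OF \<rho>SL SL_carrier[OF \<rho>SL]] \<epsilon>[OF \<rho>SL] SL_carrier[OF \<rho>SL] unfolding frob_sq_def
        by simp
    thus "\<sigma>0 ^ (2 * N) \<le> col_gram N m g"
      unfolding \<open>g = w * (\<rho> * \<delta>)\<close>
      using col_gram_mult_SLZ_ge[OF SL_carrier[OF w] exp_w SL_carrier[OF \<rho>SL] _ \<delta> m] \<sigma>0 g0 \<rho>
        by blast
    qed
  qed
qed

section \<open>The lattice \<Gamma>_i\<close>

lemma conj_mult_conj:
  fixes a b q qv :: "real mat"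
  assumes "a \<in> carrier_mat N N" "b \<in> carrier_mat N N" "q \<in> carrier_mat N N" "qv \<in> carrier_mat N N"
    and "q * qv = 1\<^sub>m N"
  shows "(qv * a * q) * (qv * b * q) = qv * (a * b) * q"
proof -
  have "(qv * a * q) * (qv * b * q) = qv * (a * ((q * qv) * (b * q)))"
    using assms(1-4) by (simp add: assoc_mult_mat[of _ N N _ N _ N])
  also have "\<dots> = qv * (a * (b * q))" using assms mult_carrier_mat[OF assms(2,3)] by simp
  also have "\<dots> = qv * (a * b) * q" using assms(1-4) by (simp add: assoc_mult_mat[of _ N N _ N _ N])
  finally show ?thesis .
qed

lemma conjugate_mat_subgroup:
  fixes q qv :: "real mat"
  assumes H: "mat_subgroup N H" and q: "q \<in> SL N"
    and qv: "qv \<in> carrier_mat N N" "qv * q = 1\<^sub>m N" "q * qv = 1\<^sub>m N"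
  shows "mat_subgroup N ((\<lambda>\<gamma>. qv * \<gamma> * q) ` H)"
proof -
  have qc: "q \<in> carrier_mat N N" using SL_carrier[OF q] .
  have Hc: "\<And>a. a \<in> H \<Longrightarrow> a \<in> carrier_mat N N" using mat_subgroup_carrier[OF H] .
  note mult = conj_mult_conj[OF _ _ qc qv(1,3)]
  have "det qv = 1" using det_mult[OF qv(1) qc] qv(2) q unfolding SL_def by simp
  hence SL: "qv * a * q \<in> SL N" if "a \<in> H" for a
    using that H q qv qc unfolding mat_subgroup_def SL_def by (auto simp: det_mult[of _ N])
  show ?thesis
    unfolding mat_subgroup_def
  proof (intro conjI ballI)
    show "(\<lambda>\<gamma>. qv * \<gamma> * q) ` H \<subseteq> SL N" using SL by blast
    have "qv * 1\<^sub>m N * q = 1\<^sub>m N" using qv by simp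
    thus "1\<^sub>m N \<in> (\<lambda>\<gamma>. qv * \<gamma> * q) ` H"
      by (rule image_eqI[OF sym]) (use H in \<open>simp add: mat_subgroup_def\<close>)
  next
    fix g h assume "g \<in> (\<lambda>\<gamma>. qv * \<gamma> * q) ` H" "h \<in> (\<lambda>\<gamma>. qv * \<gamma> * q) ` H"
    then obtain a b where "a \<in> H" "b \<in> H" "g = qv * a * q" "h = qv * b * q" by blast
    thus "g * h \<in> (\<lambda>\<gamma>. qv * \<gamma> * q) ` H"
      using mult[OF Hc Hc] H unfolding mat_subgroup_def by auto
  next
    fix g assume "g \<in> (\<lambda>\<gamma>. qv * \<gamma> * q) ` H"
    then obtain a where a: "a \<in> H" "g = qv * a * q" by blast
    then obtain a' where a': "a' \<in> H" "a * a' = 1\<^sub>m N" "a' * a = 1\<^sub>m N"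
      using H unfolding mat_subgroup_def by blast
    have "g * (qv * a' * q) = 1\<^sub>m N" "(qv * a' * q) * g = 1\<^sub>m N"
      using mult[OF Hc[OF a(1)] Hc[OF a'(1)]] mult[OF Hc[OF a'(1)] Hc[OF a(1)]] a a' qv by simp_all
    thus "\<exists>h\<in>(\<lambda>\<gamma>. qv * \<gamma> * q) ` H. g * h = 1\<^sub>m N \<and> h * g = 1\<^sub>m N"
      using a'(1) by blast
  qed
qed

text \<open>The group \<Gamma>_i = q^-1 \<Gamma>' q of the statement, written with an explicit left inverse of q.\<close>
definition conj_subgroup :: "nat \<Rightarrow> real mat \<Rightarrow> real mat set \<Rightarrow> real mat set" where
  "conj_subgroup N q H = {qi * \<gamma> * q | qi \<gamma>. qi \<in> carrier_mat N N \<and> qi * q = 1\<^sub>m N \<and> \<gamma> \<in> H}"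

lemma conj_subgroup_of_mat_subgroup:
  assumes \<Gamma>: "mat_subgroup N \<Gamma>" and \<Gamma>': "mat_subgroup N \<Gamma>'" "\<Gamma>' \<subseteq> \<Gamma>" and q: "q \<in> \<Gamma>"
  shows "mat_subgroup N (conj_subgroup N q \<Gamma>')" "conj_subgroup N q \<Gamma>' \<subseteq> \<Gamma>"
proof -
  obtain qv where qv: "qv \<in> \<Gamma>" "q * qv = 1\<^sub>m N" "qv * q = 1\<^sub>m N"
    using \<Gamma> q unfolding mat_subgroup_def by blast
  have qc: "q \<in> carrier_mat N N" and qvc: "qv \<in> carrier_mat N N"
    using mat_subgroup_carrier[OF \<Gamma>] q qv(1) by auto
  have "qi = qv" if "qi \<in> carrier_mat N N" "qi * q = 1\<^sub>m N" for qi
    using assoc_mult_mat[OF that(1) qc qvc] that qv qvc by simp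
  hence eq: "conj_subgroup N q \<Gamma>' = (\<lambda>\<gamma>. qv * \<gamma> * q) ` \<Gamma>'"
    unfolding conj_subgroup_def using qvc qv(3) by blast
  show "mat_subgroup N (conj_subgroup N q \<Gamma>')"
    unfolding eq using conjugate_mat_subgroup[OF \<Gamma>'(1) _ qvc qv(3,2)] \<Gamma> q
    unfolding mat_subgroup_def by blast
  show "conj_subgroup N q \<Gamma>' \<subseteq> \<Gamma>"
    unfolding eq using \<Gamma> \<Gamma>'(2) q qv(1) unfolding mat_subgroup_def by blast
qed

lemma finite_index_coset_representatives:
  assumes H: "mat_subgroup N H" and fi: "finite_index H L" and L: "L \<subseteq> carrier_mat N N"
  obtains R where "finite R" "R \<subseteq> L" "\<forall>g\<in>L. \<exists>\<rho>\<in>R. \<exists>h\<in>H. g = \<rho> * h"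
proof -
  let ?C = "(\<lambda>g. (\<lambda>h. g * h) ` H) ` L"
  define rep where "rep c = (SOME g. g \<in> L \<and> (\<lambda>h. g * h) ` H = c)" for c
  have rep: "rep c \<in> L \<and> (\<lambda>h. rep c * h) ` H = c" if "c \<in> ?C" for c
    unfolding rep_def by (rule someI_ex) (use that in auto)
  show ?thesis
  proof (rule that[of "rep ` ?C"])
    show "finite (rep ` ?C)" using fi unfolding finite_index_def by simp
    show "rep ` ?C \<subseteq> L" using rep by auto
    show "\<forall>g\<in>L. \<exists>\<rho>\<in>rep ` ?C. \<exists>h\<in>H. g = \<rho> * h"
    proof
      fix g assume g: "g \<in> L"
      let ?c = "(\<lambda>h. g * h) ` H"
      have "g * 1\<^sub>m N \<in> (\<lambda>h. rep ?c * h) ` H"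
        using rep[of ?c] g H unfolding mat_subgroup_def by auto
      moreover have "g * 1\<^sub>m N = g" using g L by auto
      ultimately have "\<exists>h\<in>H. g = rep ?c * h" by auto
      moreover have "rep ?c \<in> rep ` ?C" using g by blast
      ultimately show "\<exists>\<rho>\<in>rep ` ?C. \<exists>h\<in>H. g = \<rho> * h" by blast
    qed
  qed
qed

lemma col_gram_lower_bound_conj_subgroup:
  assumes \<Gamma>: "mat_subgroup N \<Gamma>" "commensurable N \<Gamma> (SLZ N)"
    and \<Gamma>': "mat_subgroup N \<Gamma>'" "\<Gamma>' \<subseteq> \<Gamma>" and q: "q \<in> \<Gamma>"
    and B: "compactin (quotient_space N (conj_subgroup N q \<Gamma>')) B"
  obtains c where "c > 0"
    "\<forall>g\<in>carrier_mat N N. lcoset (conj_subgroup N q \<Gamma>') g \<in> B \<longrightarrow> (\<forall>m\<le>N. col_gram N m g \<ge> c)"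
proof -
  note \<Gamma>i = conj_subgroup_of_mat_subgroup[OF \<Gamma>(1) \<Gamma>' q]
  have "mat_subgroup N (\<Gamma> \<inter> SLZ N)" "finite_index (\<Gamma> \<inter> SLZ N) \<Gamma>" "\<Gamma> \<subseteq> carrier_mat N N"
    using \<Gamma> mat_subgroup_carrier[OF \<Gamma>(1)] unfolding commensurable_def by auto
  then obtain R where R: "finite R" "R \<subseteq> \<Gamma>" "\<forall>g\<in>\<Gamma>. \<exists>\<rho>\<in>R. \<exists>\<delta>\<in>\<Gamma> \<inter> SLZ N. g = \<rho> * \<delta>"
    by (rule finite_index_coset_representatives)
  show ?thesis
  proof (rule col_gram_lower_bound_on_compact[OF \<Gamma>i(1) R(1)])
    show "R \<subseteq> SL N" using R(2) \<Gamma>(1) unfolding mat_subgroup_def by blast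
    show "\<exists>\<rho>\<in>R. \<exists>\<delta>\<in>SLZ N. \<gamma> = \<rho> * \<delta>" if "\<gamma> \<in> conj_subgroup N q \<Gamma>'" for \<gamma>
      using R(3) \<Gamma>i(2) that by blast
    show "compactin (quot_top (G_top N) (lcoset (conj_subgroup N q \<Gamma>'))) B"
      using B unfolding quotient_space_def .
  qed (rule that)
qed

section \<open>Diagonal matrices outside the cone\<close>

lemma diagonal_mult_index:
  assumes a: "a \<in> carrier_mat N N" "diagonal_mat a" and b: "b \<in> carrier_mat N N" "diagonal_mat b"
    and i: "i < N" and j: "j < N"
  shows "(a * b) $$ (i,j) = (if i = j then a $$ (i,i) * b $$ (i,i) else 0)"
proof -
  have "(a * b) $$ (i,j) = (\<Sum>l<N. if l = i then a $$ (i,i) * b $$ (i,j) else 0)"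
    unfolding index_mult_mat_sum[OF a(1) b(1) i j]
    by (rule sum.cong) (use a i in \<open>auto simp: diagonal_mat_def\<close>)
  thus ?thesis using b i j by (auto simp: diagonal_mat_def)
qed

lemma det_diagonal:
  assumes "d \<in> carrier_mat N N" "diagonal_mat d"
  shows "det d = (\<Prod>i<N. d $$ (i,i))"
proof -
  have "det d = prod_list (diag_mat d)"
    by (rule det_upper_triangular[OF _ assms(1)])
      (use assms in \<open>auto simp: upper_triangular_def diagonal_mat_def\<close>)
  thus ?thesis unfolding prod_list_diag_prod using assms(1) by (simp add: atLeast0LessThan)
qed

lemma log_diag_add_index:
  "i < N \<Longrightarrow> j < N \<Longrightarrow>
    (log_diag N a + log_diag N b) $$ (i,j)
      = (if i = j then ln (a $$ (i,i)) + ln (b $$ (i,i)) else 0)"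
  unfolding log_diag_def mat_diag_def by simp

lemma col_gram_SO_diag_G_hor:
  assumes vb: "valid_blocks N ns" and j: "j < length ns" and k: "k \<in> SO N"
    and a: "pos_diag N a" and b: "pos_diag N b" and h: "h \<in> G_hor N ns"
  shows "col_gram N (blockstart ns j) (k * a * b * h)
       = exp (2 * (\<Sum>i<blockstart ns j. (log_diag N a + log_diag N b) $$ (i,i)))"
proof -
  let ?m = "blockstart ns j"
  have m: "?m \<le> N" using blockstart_le[OF vb] j by simp
  have ac: "a \<in> carrier_mat N N" "diagonal_mat a" and bc: "b \<in> carrier_mat N N" "diagonal_mat b"
    using a b unfolding pos_diag_def by auto
  have ab: "a * b \<in> carrier_mat N N" "diagonal_mat (a * b)"
    using ac bc diagonal_mult_index[OF ac bc] unfolding diagonal_mat_def by auto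
  have "col_gram N ?m (k * a * b * h) = col_gram N ?m (k * (a * b))"
    using col_gram_mult_G_hor_right[OF vb j h, of "k * a * b"] SO_carrier[OF k] ac bc by simp
  also have "\<dots> = (\<Prod>i<?m. ((a * b) $$ (i,i))\<^sup>2)"
    using col_gram_mult_SO_left[OF k ab(1) m] col_gram_diagonal[OF ab m] by simp
  also have "\<dots> = (\<Prod>i<?m. exp (2 * (log_diag N a + log_diag N b) $$ (i,i)))"
  proof (rule prod.cong[OF refl])
    fix i assume "i \<in> {..<?m}"
    hence i: "i < N" using m by simp
    have "((a * b) $$ (i,i))\<^sup>2 = exp (ln (a $$ (i,i)) + ln (b $$ (i,i))) ^ 2"
      using a b i diagonal_mult_index[OF ac bc i i] unfolding pos_diag_def by (simp add: exp_add)
    moreover have "(log_diag N a + log_diag N b) $$ (i,i) = ln (a $$ (i,i)) + ln (b $$ (i,i))"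
      using i by (simp add: log_diag_add_index)
    ultimately show "((a * b) $$ (i,i))\<^sup>2 = exp (2 * (log_diag N a + log_diag N b) $$ (i,i))"
      by (simp only: exp_double)
  qed
  also have "\<dots> = exp (2 * (\<Sum>i<?m. (log_diag N a + log_diag N b) $$ (i,i)))"
    by (simp add: exp_sum sum_distrib_left)
  finally show ?thesis .
qed

lemma trace_log_diag_add_zero:
  assumes vb: "valid_blocks N ns" and a: "a \<in> A_plus_M N ns" and b: "b \<in> A_blk N ns"
  shows "(\<Sum>i<N. (log_diag N a + log_diag N b) $$ (i,i)) = 0"
proof -
  have apos: "\<And>i. i < N \<Longrightarrow> a $$ (i,i) > 0" and bpos: "\<And>i. i < N \<Longrightarrow> b $$ (i,i) > 0"
    using a b unfolding A_plus_M_def A_blk_def pos_diag_def by auto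
  have "(\<Prod>i<N. a $$ (i,i)) = (\<Prod>k<length ns. \<Prod>i\<in>block ns k. a $$ (i,i))"
    using prod_lessThan_blockstart[of "\<lambda>i. a $$ (i,i)" ns "length ns"] blockstart_length[OF vb]
      by simp
  also have "\<dots> = 1" using a unfolding A_plus_M_def by simp
  moreover have "(\<Sum>i<N. ln (a $$ (i,i))) = ln (\<Prod>i<N. a $$ (i,i))"
    by (rule ln_prod[symmetric]) (use apos in force)+
  ultimately have "(\<Sum>i<N. ln (a $$ (i,i))) = 0" by simp
  moreover have "(\<Sum>i<N. ln (b $$ (i,i))) = ln (\<Prod>i<N. b $$ (i,i))"
    by (rule ln_prod[symmetric]) (use bpos in force)+
  moreover have "(\<Prod>i<N. b $$ (i,i)) = 1"
    using det_diagonal[of b N] b unfolding A_blk_def pos_diag_def by simp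
  ultimately show ?thesis by (simp add: log_diag_add_index sum.distrib)
qed

lemma outside_cone_partial_sum_less:
  assumes vb: "valid_blocks N ns" and a: "a \<in> A_plus_M N ns" and b: "b \<in> A_blk N ns" and C: "C < 0"
    and outside: "log_diag N a + log_diag N b \<notin> cone_C N ns C"
  obtains j where "j < length ns" "(\<Sum>i<blockstart ns j. (log_diag N a + log_diag N b) $$ (i,i)) < C"
proof -
  let ?x = "log_diag N a + log_diag N b"
  have "?x $$ (i,i) - ?x $$ (j,j) \<ge> max 0 C" if "i < N" "j < N" "i < j" "same_block ns i j" for i j
  proof -
    have "a $$ (j,j) \<le> a $$ (i,i)" "b $$ (i,i) = b $$ (j,j)" "a $$ (j,j) > 0"
      using a b that unfolding A_plus_M_def A_blk_def pos_diag_def by auto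
    thus ?thesis using that C by (simp add: log_diag_add_index)
  qed
  moreover have x: "?x \<in> carrier_mat N N" unfolding log_diag_def by simp
  moreover have "diagonal_mat ?x"
    unfolding diagonal_mat_def log_diag_def mat_diag_def by simp
  ultimately have "\<not> (\<forall>k. 1 \<le> k \<and> k < length ns \<longrightarrow> (\<Sum>i<blockstart ns k. ?x $$ (i,i)) \<ge> C)"
    using outside trace_log_diag_add_zero[OF vb a b] unfolding cone_C_def by blast
  thus ?thesis using that by force
qed

lemma col_gram_outside_cone_less:
  assumes vb: "valid_blocks N ns" and k: "k \<in> SO N" and a: "a \<in> A_plus_M N ns"
    and b: "b \<in> A_blk N ns"
    and h: "h \<in> G_hor N ns" and C: "C < 0"
    and outside: "log_diag N a + log_diag N b \<notin> cone_C N ns C"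
  obtains j where "j < length ns" "col_gram N (blockstart ns j) (k * a * b * h) < exp (2 * C)"
proof -
  obtain j where j: "j < length ns"
    and less: "(\<Sum>i<blockstart ns j. (log_diag N a + log_diag N b) $$ (i,i)) < C"
    by (rule outside_cone_partial_sum_less[OF vb a b C outside])
  have "col_gram N (blockstart ns j) (k * a * b * h) < exp (2 * C)"
    using col_gram_SO_diag_G_hor[OF vb j k _ _ h] a b less unfolding A_plus_M_def A_blk_def by simp
  thus ?thesis using that j by blast
qed

lemma SO_diag_G_hor_carrier:
  "k \<in> SO N \<Longrightarrow> pos_diag N a \<Longrightarrow> pos_diag N b \<Longrightarrow> h \<in> G_hor N ns \<Longrightarrow> k * a * b * h \<in> carrier_mat N N"
  unfolding pos_diag_def G_hor_def SL_def SO_def Let_def by auto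

theorem lemma4p12:
  fixes N :: nat and ns :: "nat list"
    and \<Gamma> \<Gamma>' :: "real mat set" and q :: "real mat" and B :: "real mat set set"
  assumes "N \<ge> 2"
    and "valid_blocks N ns"
    and "mat_subgroup N \<Gamma>" and "commensurable N \<Gamma> (SLZ N)"
    and "mat_subgroup N \<Gamma>'" and "finite_index \<Gamma>' \<Gamma>" and "neat \<Gamma>'"
    and "q \<in> \<Gamma>"
    and "compactin (quotient_space N {qi * \<gamma> * q | qi \<gamma>. qi \<in> carrier_mat N N \<and> qi * q = 1\<^sub>m N \<and> \<gamma> \<in> \<Gamma>'}) B"
  shows "\<exists>C<0. \<forall>k\<in>SO N. \<forall>a\<in>A_plus_M N ns. \<forall>b\<in>A_blk N ns.
           log_diag N a + log_diag N b \<notin> cone_C N ns C \<longrightarrow>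
           lcoset {qi * \<gamma> * q | qi \<gamma>. qi \<in> carrier_mat N N \<and> qi * q = 1\<^sub>m N \<and> \<gamma> \<in> \<Gamma>'} ` {k * a * b * h | h. h \<in> G_hor N ns} \<inter> B = {}"
proof -
  have "\<Gamma>' \<subseteq> \<Gamma>" using assms(6) unfolding finite_index_def by simp
  then obtain c where c: "c > 0" and lower: "\<forall>g\<in>carrier_mat N N.
      lcoset (conj_subgroup N q \<Gamma>') g \<in> B \<longrightarrow> (\<forall>m\<le>N. col_gram N m g \<ge> c)"
    using col_gram_lower_bound_conj_subgroup[OF assms(3,4,5) _ assms(8)] assms(9)
    unfolding conj_subgroup_def[symmetric] by blast
  define C where "C = min (-1) (ln c / 2)"
  have "exp (2 * C) \<le> exp (ln c)" unfolding C_def by simp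
  hence C: "C < 0" "exp (2 * C) \<le> c" using c unfolding C_def by simp_all
  have "lcoset (conj_subgroup N q \<Gamma>') (k * a * b * h) \<notin> B"
    if k: "k \<in> SO N" and a: "a \<in> A_plus_M N ns" and b: "b \<in> A_blk N ns" and h: "h \<in> G_hor N ns"
      and outside: "log_diag N a + log_diag N b \<notin> cone_C N ns C" for k a b h
  proof
    assume "lcoset (conj_subgroup N q \<Gamma>') (k * a * b * h) \<in> B"
    moreover have "k * a * b * h \<in> carrier_mat N N"
      using SO_diag_G_hor_carrier k a b h unfolding A_plus_M_def A_blk_def by blast
    ultimately have bound: "\<forall>m\<le>N. c \<le> col_gram N m (k * a * b * h)" using lower by blast
    obtain j where "j < length ns" "col_gram N (blockstart ns j) (k * a * b * h) < exp (2 * C)"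
      by (rule col_gram_outside_cone_less[OF assms(2) k a b h C(1) outside])
    thus False using bound blockstart_le[OF assms(2), of j] C(2) by fastforce
  qed
  thus ?thesis unfolding conj_subgroup_def[symmetric] using C(1) by blast
qed

end
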